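(* Let $G$ and $H$ be graded groups, let $U\subset G$ be open and let $\Phi:U\to H$ be a smooth map. Then $\Phi$ is uniformly Pansu differentiable on $U$ if and only if $\Phi$ preserves the filtration at every point $x\in U$. Moreover, for such a map $\Phi$, the Pansu derivative yields a smooth function $(x,z)\mapsto \mathrm{PD}_x\Phi(z)$ on $U\times G$.
   Context: A graded group is a connected, simply connected nilpotent real Lie group $G$ whose Lie algebra $\mathfrak g$ is equipped with a vector space decomposition $\mathfrak g=\bigoplus_{j\ge1}\mathfrak g_j$ (only finitely many $\mathfrak g_j$ nonzero) with $[\mathfrak g_i,\mathfrak g_j]\subset\mathfrak g_{i+j}$. The map $\exp_G:\mathfrak g\to G$ is a global diffeomorphism, with inverse $\ln_G$. Dilations: for $r>0$, $\delta_r:\mathfrak g\to\mathfrak g$ is the linear map with $\delta_rX=r^jX$ for $X\in\mathfrak g_j$, and on $G$, $\delta_r(\exp_G X)=\exp_G(\delta_rX)$. $H$ is another graded group with Lie algebra $\mathfrak h=\bigoplus_j\mathfrak h_j$ and analogous notation. For $x\in G$, $\tau^G_x:=D_0L_x:\mathfrak g\to T_xG$ is the differential at the identity of the left translation $L_x$ (similarly $\tau^H$). For $\Phi$ smooth from an open $U\subset G$ to $H$ and $x\in U$, set $\mathfrak d_x\Phi:=(\tau^H_{\Phi(x)})^{-1}\circ D_x\Phi\circ\tau^G_x:\mathfrak g\to\mathfrak h$. $\Phi$ preserves the filtration at $x$ if $\mathfrak d_x\Phi(\mathfrak g_j)\subset\mathfrak h_1\oplus\cdots\oplus\mathfrak h_j$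 for all $j$. A map $\Phi:U\to H$ is Pansu differentiable at $x\in U$ if for every $z\in G$ the limit $\mathrm{PD}_x\Phi(z):=\lim_{\varepsilon\to0^+}\delta_{\varepsilon^{-1}}\big(\Phi(x)^{-1}\Phi(x\,\delta_\varepsilon z)\big)$ exists; it is uniformly Pansu differentiable on $U$ if it is Pansu differentiable at every $x\in U$ and the limit holds locally uniformly on $U\times G$ (every point of $U\times G$ has a compact neighbourhood on which the convergence is uniform). *)

theory Defs
  imports "HOL-Analysis.Analysis"
begin

text \<open>C-infinity smoothness on a set U (intended: U open): a family D of iterated
  Frechet derivatives, D [] = f, and at every point of U the map D ds has Frechet
  derivative v \<mapsto> D (v # ds) x.\<close>
definition smooth_on :: "'a::euclidean_space set \<Rightarrow> ('a \<Rightarrow> 'b::euclidean_space) \<Rightarrow> bool" where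
  "smooth_on U f \<longleftrightarrow>
     (\<exists>D :: 'a list \<Rightarrow> 'a \<Rightarrow> 'b. D [] = f \<and>
        (\<forall>ds. \<forall>x\<in>U. (D ds has_derivative (\<lambda>v. D (v # ds) x)) (at x)))"

definition graded_vs :: "(nat \<Rightarrow> 'g::euclidean_space set) \<Rightarrow> bool" where
  "graded_vs V \<longleftrightarrow> (\<forall>j. subspace (V j)) \<and> V 0 = {0} \<and> (\<exists>N. \<forall>j>N. V j = {0}) \<and>
     (\<forall>x. \<exists>!c. (\<forall>j. c j \<in> V j) \<and> finite {j. c j \<noteq> 0} \<and> x = (\<Sum>j\<in>{j. c j \<noteq> 0}. c j))"

definition gcomp :: "(nat \<Rightarrow> 'g::euclidean_space set) \<Rightarrow> 'g \<Rightarrow> nat \<Rightarrow> 'g" where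
  "gcomp V x = (THE c. (\<forall>j. c j \<in> V j) \<and> finite {j. c j \<noteq> 0} \<and> x = (\<Sum>j\<in>{j. c j \<noteq> 0}. c j))"

definition dil :: "(nat \<Rightarrow> 'g::euclidean_space set) \<Rightarrow> real \<Rightarrow> 'g \<Rightarrow> 'g" where
  "dil V r x = (\<Sum>j\<in>{j. gcomp V x j \<noteq> 0}. (r ^ j) *\<^sub>R gcomp V x j)"

text \<open>A graded group in exponential coordinates: the underlying set is the Lie algebra
  'g itself (so exp_G = id), with a smooth associative group law m for which every line
  t \<mapsto> t X is a one-parameter subgroup (i.e. exp is the identity map; identity 0 and
  inverse -X follow), and the dilations of the grading V are group automorphisms
  (equivalently, the grading is compatible with the Lie bracket: [g_i,g_j] \<subseteq> g_(i+j)).\<close>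
definition graded_group :: "('g::euclidean_space \<Rightarrow> 'g \<Rightarrow> 'g) \<Rightarrow> (nat \<Rightarrow> 'g set) \<Rightarrow> bool" where
  "graded_group m V \<longleftrightarrow>
     (\<forall>x y z. m (m x y) z = m x (m y z)) \<and>
     (\<forall>X s t. m (s *\<^sub>R X) (t *\<^sub>R X) = (s + t) *\<^sub>R X) \<and>
     smooth_on UNIV (\<lambda>p. m (fst p) (snd p)) \<and>
     graded_vs V \<and>
     (\<forall>r>0. \<forall>x y. dil V r (m x y) = m (dil V r x) (dil V r y))"

definition tau :: "('g::euclidean_space \<Rightarrow> 'g \<Rightarrow> 'g) \<Rightarrow> 'g \<Rightarrow> 'g \<Rightarrow> 'g" where
  "tau m x = frechet_derivative (m x) (at 0)"

definition ldiff :: "('g::euclidean_space \<Rightarrow> 'g \<Rightarrow> 'g) \<Rightarrow> ('h::euclidean_space \<Rightarrow> 'h \<Rightarrow> 'h)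
     \<Rightarrow> ('g \<Rightarrow> 'h) \<Rightarrow> 'g \<Rightarrow> 'g \<Rightarrow> 'h" where
  "ldiff mG mH Phi x = inv (tau mH (Phi x)) \<circ> frechet_derivative Phi (at x) \<circ> tau mG x"

definition preserves_filtration_at ::
  "('g::euclidean_space \<Rightarrow> 'g \<Rightarrow> 'g) \<Rightarrow> (nat \<Rightarrow> 'g set) \<Rightarrow>
   ('h::euclidean_space \<Rightarrow> 'h \<Rightarrow> 'h) \<Rightarrow> (nat \<Rightarrow> 'h set) \<Rightarrow> ('g \<Rightarrow> 'h) \<Rightarrow> 'g \<Rightarrow> bool" where
  "preserves_filtration_at mG VG mH VH Phi x \<longleftrightarrow>
     (\<forall>j. ldiff mG mH Phi x ` VG j \<subseteq> span (\<Union>i\<in>{1..j}. VH i))"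

text \<open>The Pansu difference quotient delta_(1/eps)(Phi(x)^-1 Phi(x delta_eps z));
  in exponential coordinates the group inverse is negation.\<close>
definition pansu_quot ::
  "('g::euclidean_space \<Rightarrow> 'g \<Rightarrow> 'g) \<Rightarrow> (nat \<Rightarrow> 'g set) \<Rightarrow>
   ('h::euclidean_space \<Rightarrow> 'h \<Rightarrow> 'h) \<Rightarrow> (nat \<Rightarrow> 'h set) \<Rightarrow> ('g \<Rightarrow> 'h) \<Rightarrow> 'g \<Rightarrow> 'g \<Rightarrow> real \<Rightarrow> 'h" where
  "pansu_quot mG VG mH VH Phi x z eps =
     dil VH (1 / eps) (mH (- Phi x) (Phi (mG x (dil VG eps z))))"

definition pansu_diff_at where
  "pansu_diff_at mG VG mH VH Phi x \<longleftrightarrow>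
     (\<forall>z. \<exists>l. (pansu_quot mG VG mH VH Phi x z \<longlongrightarrow> l) (at_right 0))"

definition PD where
  "PD mG VG mH VH Phi x z = Lim (at_right 0) (pansu_quot mG VG mH VH Phi x z)"

definition unif_pansu_diff_on where
  "unif_pansu_diff_on mG VG mH VH Phi U \<longleftrightarrow>
     (\<forall>x\<in>U. pansu_diff_at mG VG mH VH Phi x) \<and>
     (\<forall>p\<in>U \<times> UNIV. \<exists>K. compact K \<and> K \<subseteq> U \<times> UNIV \<and> p \<in> interior K \<and>
        uniform_limit K (\<lambda>eps q. pansu_quot mG VG mH VH Phi (fst q) (snd q) eps)
                        (\<lambda>q. PD mG VG mH VH Phi (fst q) (snd q)) (at_right 0))"

end

theory Submission
  imports Defs
begin

text \<open>
  Necessity: for \<open>v\<close> of degree \<open>j\<close>, the Pansu difference quotient at \<open>v\<close> is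
  \<open>dil (1 / e) (g (e ^ j))\<close> where \<open>g s = Phi(x)\<inverse> Phi(x (s v))\<close> is a curve with \<open>g 0 = 0\<close>
  and velocity \<open>ldiff x v\<close> at \<open>0\<close>. The degree-\<open>k\<close> component of \<open>g (e ^ j) / e ^ j\<close> is
  \<open>e ^ (k - j)\<close> times that of the quotient, so it tends to \<open>0\<close> for \<open>k > j\<close>: \<open>ldiff x v\<close> has
  no components of degree above \<open>j\<close>.

  Sufficiency: for fixed \<open>x\<close>, \<open>z\<close> and \<open>e > 0\<close> the curve \<open>s \<mapsto> pansu_quot x (s z) e\<close>
  starts at \<open>0\<close> and has left-trivialised velocity \<open>dil (1 / e) (ldiff y (dil e z))\<close> at
  \<open>y = x dil e (s z)\<close>. When \<open>ldiff\<close> preserves the filtration this is a polynomial in \<open>e\<close>,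
  jointly smooth in \<open>(e, y, z)\<close>, whose value at \<open>e = 0\<close> is the graded part \<open>A(x, z)\<close> of
  \<open>ldiff x z\<close>. So for small \<open>e\<close> the velocity of the curve is uniformly close to \<open>A(x, z)\<close>,
  and a Gronwall argument compares the curve with the one-parameter subgroup \<open>s \<mapsto> s A(x, z)\<close>:
  the quotient converges to \<open>A(x, z)\<close> locally uniformly. Hence \<open>PD x z = A(x, z)\<close>, which is
  smooth.
\<close>

section \<open>Gradings\<close>

locale grading =
  fixes V :: "nat \<Rightarrow> 'g::euclidean_space set"
  assumes graded_vs: "graded_vs V"
begin

definition degree_bound :: nat where
  "degree_bound = (SOME N. \<forall>j>N. V j = {0})"

lemma grading_above_degree_bound: assumes "j > degree_bound" shows "V j = {0}"
proof -
  have "\<exists>N. \<forall>j>N. V j = {0}" using graded_vs unfolding graded_vs_def by blast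
  hence "\<forall>j>degree_bound. V j = {0}" unfolding degree_bound_def by (rule someI_ex)
  thus ?thesis using assms by blast
qed

lemma subspace_grading: "subspace (V j)"
  using graded_vs unfolding graded_vs_def by auto

lemma grading_0: "V 0 = {0}"
  using graded_vs unfolding graded_vs_def by auto

lemma gcomp_spec:
  "(\<forall>j. gcomp V x j \<in> V j) \<and> finite {j. gcomp V x j \<noteq> 0} \<and>
   x = (\<Sum>j\<in>{j. gcomp V x j \<noteq> 0}. gcomp V x j)"
proof -
  have "\<exists>!c. (\<forall>j. c j \<in> V j) \<and> finite {j. c j \<noteq> 0} \<and> x = (\<Sum>j\<in>{j. c j \<noteq> 0}. c j)"
    using graded_vs unfolding graded_vs_def by blast
  thus ?thesis unfolding gcomp_def by (rule theI')
qed

lemma gcomp_unique: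
  assumes "\<And>j. c j \<in> V j" "\<And>j. j > degree_bound \<Longrightarrow> c j = 0" "x = (\<Sum>j\<le>degree_bound. c j)"
  shows "gcomp V x = c"
proof -
  let ?P = "\<lambda>c. (\<forall>j. c j \<in> V j) \<and> finite {j. c j \<noteq> 0} \<and> x = (\<Sum>j\<in>{j. c j \<noteq> 0}. c j)"
  have supp: "{j. c j \<noteq> 0} \<subseteq> {..degree_bound}" using assms(2) not_le by auto
  have "(\<Sum>j\<le>degree_bound. c j) = (\<Sum>j\<in>{j. c j \<noteq> 0}. c j)"
    using supp by (intro sum.mono_neutral_right) auto
  hence "?P c" using assms(1,3) finite_subset[OF supp] by simp
  moreover have "\<exists>!c. ?P c" using graded_vs unfolding graded_vs_def by blast
  ultimately show ?thesis unfolding gcomp_def by (rule the1_equality[rotated])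
qed

lemma gcomp_mem: "gcomp V x j \<in> V j"
  using gcomp_spec by blast

lemma gcomp_above_degree_bound: "j > degree_bound \<Longrightarrow> gcomp V x j = 0"
  using gcomp_mem[of x j] grading_above_degree_bound[of j] by simp

lemma gcomp_degree_0: "gcomp V x 0 = 0"
  using gcomp_mem[of x 0] grading_0 by simp

lemma gcomp_support: "{j. gcomp V x j \<noteq> 0} \<subseteq> {..degree_bound}"
proof
  fix j assume "j \<in> {j. gcomp V x j \<noteq> 0}"
  hence "\<not> j > degree_bound" using gcomp_above_degree_bound by auto
  thus "j \<in> {..degree_bound}" by simp
qed

lemma sum_gcomp: assumes "degree_bound \<le> n" shows "(\<Sum>j\<le>n. gcomp V x j) = x"
proof -
  have "(\<Sum>j\<le>n. gcomp V x j) = (\<Sum>j\<in>{j. gcomp V x j \<noteq> 0}. gcomp V x j)"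
    using gcomp_support[of x] assms by (intro sum.mono_neutral_right) (auto simp: subset_iff)
  also have "\<dots> = x" using gcomp_spec by metis
  finally show ?thesis .
qed

lemma gcomp_add: "gcomp V (x + y) = (\<lambda>j. gcomp V x j + gcomp V y j)"
  by (rule gcomp_unique)
    (simp_all add: gcomp_mem subspace_grading subspace_add gcomp_above_degree_bound
      sum.distrib sum_gcomp)

lemma gcomp_scaleR: "gcomp V (c *\<^sub>R x) = (\<lambda>j. c *\<^sub>R gcomp V x j)"
  by (rule gcomp_unique)
    (simp_all add: gcomp_mem subspace_grading subspace_scale gcomp_above_degree_bound
      flip: scaleR_sum_right add: sum_gcomp)

lemma gcomp_homogeneous: "x \<in> V j \<Longrightarrow> gcomp V x = (\<lambda>i. if i = j then x else 0)"
  by (rule gcomp_unique)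
    (auto simp: subspace_0[OF subspace_grading] grading_above_degree_bound not_le)

lemma linear_gcomp: "linear (\<lambda>x. gcomp V x j)"
  by (rule linearI) (simp_all add: gcomp_add gcomp_scaleR)

lemma bounded_linear_gcomp: "bounded_linear (\<lambda>x. gcomp V x j)"
  using linear_gcomp linear_conv_bounded_linear by blast

lemma gcomp_zero [simp]: "gcomp V 0 j = 0"
  using linear_0[OF linear_gcomp] by simp

lemma dil_eq_sum: "degree_bound \<le> n \<Longrightarrow> dil V r x = (\<Sum>j\<le>n. (r ^ j) *\<^sub>R gcomp V x j)"
  unfolding dil_def using gcomp_support[of x]
  by (intro sum.mono_neutral_left) (auto simp: subset_iff)

lemma gcomp_dil: "gcomp V (dil V r x) k = (r ^ k) *\<^sub>R gcomp V x k"
proof -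
  have "gcomp V (dil V r x) = (\<lambda>j. (r ^ j) *\<^sub>R gcomp V x j)"
    by (rule gcomp_unique)
      (simp_all add: gcomp_mem subspace_grading subspace_scale gcomp_above_degree_bound
        dil_eq_sum[OF order_refl])
  thus ?thesis by simp
qed

lemma dil_homogeneous: assumes "x \<in> V j" shows "dil V r x = (r ^ j) *\<^sub>R x"
proof (cases "j \<le> degree_bound")
  case True
  have "dil V r x = (\<Sum>i\<le>degree_bound. if i = j then r ^ j *\<^sub>R x else 0)"
    unfolding dil_eq_sum[OF order_refl] gcomp_homogeneous[OF assms] by (rule sum.cong) auto
  thus ?thesis using True by simp
next
  case False
  hence "x = 0" using grading_above_degree_bound assms by auto
  thus ?thesis by (simp add: dil_eq_sum[OF order_refl])
qed

lemma linear_dil: "linear (dil V r)"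
  unfolding dil_eq_sum[OF order_refl, abs_def]
  by (rule linearI)
    (simp_all add: gcomp_add gcomp_scaleR sum.distrib scaleR_add_right scaleR_sum_right ac_simps)

lemma bounded_linear_dil: "bounded_linear (dil V r)"
  using linear_dil linear_conv_bounded_linear by blast

lemma dil_zero: "dil V r 0 = 0"
  using linear_0[OF linear_dil] .

lemma dil_0: "dil V 0 x = 0"
  by (auto simp: dil_eq_sum[OF order_refl] power_0_left gcomp_degree_0 intro!: sum.neutral)

lemma dil_scaleR: "dil V r (c *\<^sub>R x) = c *\<^sub>R dil V r x"
  using linear_scale[OF linear_dil] by blast

lemma continuous_on_dil: "continuous_on S (\<lambda>p. dil V (fst p) (snd p))"
  unfolding dil_eq_sum[OF order_refl]
  by (intro continuous_intros linear_continuous_on_compose[OF continuous_on_snd] linear_gcomp)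

lemma span_low_degrees:
  "span (\<Union>i\<in>{1..j}. V i) = {y. \<forall>k>j. gcomp V y k = 0}"
proof
  have "subspace {y. \<forall>k>j. gcomp V y k = 0}"
    unfolding subspace_def by (simp add: gcomp_add gcomp_scaleR)
  moreover have "(\<Union>i\<in>{1..j}. V i) \<subseteq> {y. \<forall>k>j. gcomp V y k = 0}"
    using gcomp_homogeneous by auto
  ultimately show "span (\<Union>i\<in>{1..j}. V i) \<subseteq> {y. \<forall>k>j. gcomp V y k = 0}"
    by (simp add: span_minimal)
next
  show "{y. \<forall>k>j. gcomp V y k = 0} \<subseteq> span (\<Union>i\<in>{1..j}. V i)"
  proof
    fix y assume y: "y \<in> {y. \<forall>k>j. gcomp V y k = 0}"
    have "y = (\<Sum>k\<le>max j degree_bound. gcomp V y k)" by (simp add: sum_gcomp)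
    also have "\<dots> = (\<Sum>k\<in>{1..j}. gcomp V y k)"
      using y gcomp_degree_0 by (intro sum.mono_neutral_right) (auto simp: not_le Suc_le_eq)
    also have "\<dots> \<in> span (\<Union>i\<in>{1..j}. V i)"
      using gcomp_mem by (intro span_sum span_base) blast
    finally show "y \<in> span (\<Union>i\<in>{1..j}. V i)" .
  qed
qed

end

section \<open>Functions of class \<open>C\<^sup>k\<close>\<close>

fun Ck_on :: "nat \<Rightarrow> 'a::euclidean_space set \<Rightarrow> ('a \<Rightarrow> 'b::euclidean_space) \<Rightarrow> bool" where
  "Ck_on 0 U f \<longleftrightarrow> continuous_on U f"
| "Ck_on (Suc k) U f \<longleftrightarrow>
     (\<exists>f'. (\<forall>x\<in>U. (f has_derivative f' x) (at x)) \<and> (\<forall>v. Ck_on k U (\<lambda>x. f' x v)))"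

lemma Ck_onI:
  "(\<And>x. x \<in> U \<Longrightarrow> (f has_derivative f' x) (at x)) \<Longrightarrow> (\<And>v. Ck_on k U (\<lambda>x. f' x v))
    \<Longrightarrow> Ck_on (Suc k) U f"
  unfolding Ck_on.simps by blast

lemma linear_eq_sum_Basis:
  assumes "linear L" shows "L w = (\<Sum>i\<in>Basis. (w \<bullet> i) *\<^sub>R L i)"
proof -
  have "L w = L (\<Sum>i\<in>Basis. (w \<bullet> i) *\<^sub>R i)" by (simp add: euclidean_representation)
  also have "\<dots> = (\<Sum>i\<in>Basis. (w \<bullet> i) *\<^sub>R L i)"
    by (simp add: linear_sum[OF assms] linear_scale[OF assms])
  finally show ?thesis .
qed

lemma Ck_on_cong: "open U \<Longrightarrow> (\<And>x. x \<in> U \<Longrightarrow> f x = g x) \<Longrightarrow> Ck_on k U f \<Longrightarrow> Ck_on k U g"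
proof (induction k arbitrary: f g)
  case 0 thus ?case using continuous_on_eq[of U f g] by simp
next
  case (Suc k)
  obtain f' where f': "\<And>x. x \<in> U \<Longrightarrow> (f has_derivative f' x) (at x)" "\<And>v. Ck_on k U (\<lambda>x. f' x v)"
    using Suc.prems(3) by auto
  have "(g has_derivative f' x) (at x)" if "x \<in> U" for x
    using has_derivative_transform_within_open[OF f'(1)[OF that] Suc.prems(1) that] Suc.prems(2)
    by auto
  thus ?case using f'(2) by auto
qed

lemma Ck_on_imp_continuous_on: assumes "Ck_on k U f" shows "continuous_on U f"
proof (cases k)
  case 0 thus ?thesis using assms by simp
next
  case (Suc k')
  then obtain f' where "\<And>x. x \<in> U \<Longrightarrow> (f has_derivative f' x) (at x)"
    using assms by auto
  thus ?thesis by (intro continuous_at_imp_continuous_on ballI has_derivative_continuous)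
qed

lemma Ck_on_SucD: "Ck_on (Suc k) U f \<Longrightarrow> Ck_on k U f"
proof (induction k arbitrary: f)
  case 0 thus ?case using Ck_on_imp_continuous_on[OF "0.prems"] by simp
next
  case (Suc k)
  obtain f' where f': "\<And>x. x \<in> U \<Longrightarrow> (f has_derivative f' x) (at x)"
    "\<And>v. Ck_on (Suc k) U (\<lambda>x. f' x v)"
    using Suc.prems by auto
  show ?case by (rule Ck_onI[where f'=f']) (use f' Suc.IH in auto)
qed

lemma Ck_on_has_derivative:
  "Ck_on (Suc k) U f \<Longrightarrow> x \<in> U \<Longrightarrow> (f has_derivative frechet_derivative f (at x)) (at x)"
  using frechet_derivative_at by fastforce

lemma Ck_on_frechet_derivative:
  assumes "open U" "Ck_on (Suc k) U f"
  shows "Ck_on k U (\<lambda>x. frechet_derivative f (at x) v)"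
proof -
  obtain f' where f': "\<And>x. x \<in> U \<Longrightarrow> (f has_derivative f' x) (at x)" "\<And>v. Ck_on k U (\<lambda>x. f' x v)"
    using assms(2) by auto
  show ?thesis
    by (rule Ck_on_cong[OF assms(1) _ f'(2)]) (simp add: frechet_derivative_at[OF f'(1)])
qed

lemma Ck_on_const: "Ck_on k U (\<lambda>x. c)"
proof (induction k arbitrary: c)
  case (Suc k) show ?case by (rule Ck_onI[where f'="\<lambda>x v. 0"]) (simp_all add: Suc)
qed simp

lemma Ck_on_id: "Ck_on k U (\<lambda>x. x)"
proof (cases k)
  case (Suc k') show ?thesis
    unfolding Suc by (rule Ck_onI[where f'="\<lambda>x v. v"]) (simp_all add: Ck_on_const)
qed simp

lemma Ck_on_bounded_linear: "bounded_linear L \<Longrightarrow> Ck_on k U f \<Longrightarrow> Ck_on k U (\<lambda>x. L (f x))"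
proof (induction k arbitrary: f)
  case 0 thus ?case by (simp add: bounded_linear.continuous_on)
next
  case (Suc k)
  obtain f' where f': "\<And>x. x \<in> U \<Longrightarrow> (f has_derivative f' x) (at x)" "\<And>v. Ck_on k U (\<lambda>x. f' x v)"
    using Suc.prems(2) by auto
  show ?case
  proof (rule Ck_onI[where f'="\<lambda>x v. L (f' x v)"])
    show "((\<lambda>x. L (f x)) has_derivative (\<lambda>v. L (f' x v))) (at x)" if "x \<in> U" for x
      by (rule bounded_linear.has_derivative[OF Suc.prems(1) f'(1)[OF that]])
    show "Ck_on k U (\<lambda>x. L (f' x v))" for v by (rule Suc.IH[OF Suc.prems(1) f'(2)])
  qed
qed

lemma Ck_on_add: "Ck_on k U f \<Longrightarrow> Ck_on k U g \<Longrightarrow> Ck_on k U (\<lambda>x. f x + g x)"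
proof (induction k arbitrary: f g)
  case 0 thus ?case by (simp add: continuous_on_add)
next
  case (Suc k)
  obtain f' where f': "\<And>x. x \<in> U \<Longrightarrow> (f has_derivative f' x) (at x)" "\<And>v. Ck_on k U (\<lambda>x. f' x v)"
    using Suc.prems(1) by auto
  obtain g' where g': "\<And>x. x \<in> U \<Longrightarrow> (g has_derivative g' x) (at x)" "\<And>v. Ck_on k U (\<lambda>x. g' x v)"
    using Suc.prems(2) by auto
  show ?case
    by (rule Ck_onI[where f'="\<lambda>x v. f' x v + g' x v"])
      (use f' g' Suc.IH in \<open>auto intro: has_derivative_add\<close>)
qed

lemma Ck_on_scaleR: "Ck_on k U a \<Longrightarrow> Ck_on k U f \<Longrightarrow> Ck_on k U (\<lambda>x. a x *\<^sub>R f x)"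
proof (induction k arbitrary: a f)
  case 0 thus ?case by (simp add: continuous_on_scaleR)
next
  case (Suc k)
  obtain a' where a': "\<And>x. x \<in> U \<Longrightarrow> (a has_derivative a' x) (at x)" "\<And>v. Ck_on k U (\<lambda>x. a' x v)"
    using Suc.prems(1) by auto
  obtain f' where f': "\<And>x. x \<in> U \<Longrightarrow> (f has_derivative f' x) (at x)" "\<And>v. Ck_on k U (\<lambda>x. f' x v)"
    using Suc.prems(2) by auto
  show ?case
  proof (rule Ck_onI[where f'="\<lambda>x v. a x *\<^sub>R f' x v + a' x v *\<^sub>R f x"])
    show "((\<lambda>x. a x *\<^sub>R f x) has_derivative (\<lambda>v. a x *\<^sub>R f' x v + a' x v *\<^sub>R f x)) (at x)"
      if "x \<in> U" for x
      using has_derivative_scaleR[OF a'(1) f'(1)] that by blast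
    show "Ck_on k U (\<lambda>x. a x *\<^sub>R f' x v + a' x v *\<^sub>R f x)" for v
      by (intro Ck_on_add Suc.IH Ck_on_SucD[OF Suc.prems(1)] Ck_on_SucD[OF Suc.prems(2)]
          a'(2) f'(2))
  qed
qed

lemma Ck_on_sum:
  "finite I \<Longrightarrow> (\<And>i. i \<in> I \<Longrightarrow> Ck_on k U (f i)) \<Longrightarrow> Ck_on k U (\<lambda>x. \<Sum>i\<in>I. f i x)"
proof (induction I rule: finite_induct)
  case empty thus ?case by (simp add: Ck_on_const)
next
  case (insert i I) thus ?case by (simp add: Ck_on_add)
qed

lemma Ck_on_power:
  fixes f :: "'a::euclidean_space \<Rightarrow> real"
  assumes "Ck_on k U f" shows "Ck_on k U (\<lambda>x. f x ^ n)"
proof (induction n)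
  case 0 thus ?case by (simp add: Ck_on_const)
next
  case (Suc n) thus ?case using Ck_on_scaleR[OF assms Suc.IH] by simp
qed

lemma Ck_on_Pair: "Ck_on k U f \<Longrightarrow> Ck_on k U g \<Longrightarrow> Ck_on k U (\<lambda>x. (f x, g x))"
proof -
  assume f: "Ck_on k U f" and g: "Ck_on k U g"
  have "Ck_on k U (\<lambda>x. (f x, 0) + (0, g x))"
    by (intro Ck_on_add Ck_on_bounded_linear[OF _ f] Ck_on_bounded_linear[OF _ g]
        bounded_linear_Pair
        bounded_linear_ident bounded_linear_zero)
  thus ?thesis by simp
qed

lemma Ck_on_fst: "Ck_on k U f \<Longrightarrow> Ck_on k U (\<lambda>x. fst (f x))"
  by (rule Ck_on_bounded_linear[OF bounded_linear_fst])

lemma Ck_on_snd: "Ck_on k U f \<Longrightarrow> Ck_on k U (\<lambda>x. snd (f x))"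
  by (rule Ck_on_bounded_linear[OF bounded_linear_snd])

text \<open>The derivative \<open>g' (f x) (f' x v)\<close> is expanded in a basis,
  \<open>\<Sum>i. (f' x v \<bullet> i) *\<^sub>R g' (f x) i\<close>, so that it is built from \<open>C\<^sup>k\<close> functions by
  sums and products.\<close>
lemma Ck_on_compose:
  "open U \<Longrightarrow> Ck_on k V g \<Longrightarrow> Ck_on k U f \<Longrightarrow> f ` U \<subseteq> V \<Longrightarrow> Ck_on k U (\<lambda>x. g (f x))"
proof (induction k arbitrary: f g)
  case 0 thus ?case by (auto intro: continuous_on_compose2)
next
  case (Suc k)
  obtain g' where g': "\<And>y. y \<in> V \<Longrightarrow> (g has_derivative g' y) (at y)" "\<And>v. Ck_on k V (\<lambda>y. g' y v)"
    using Suc.prems(2) by auto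
  obtain f' where f': "\<And>x. x \<in> U \<Longrightarrow> (f has_derivative f' x) (at x)" "\<And>v. Ck_on k U (\<lambda>x. f' x v)"
    using Suc.prems(3) by auto
  have fV: "f x \<in> V" if "x \<in> U" for x using Suc.prems(4) that by blast
  show ?case
  proof (rule Ck_onI[where f'="\<lambda>x v. g' (f x) (f' x v)"])
    show "((\<lambda>x. g (f x)) has_derivative (\<lambda>v. g' (f x) (f' x v))) (at x)" if "x \<in> U" for x
      using has_derivative_compose[OF f'(1) g'(1)] fV that by blast
    fix v
    have "Ck_on k U (\<lambda>x. \<Sum>i\<in>Basis. (f' x v \<bullet> i) *\<^sub>R g' (f x) i)"
    proof (intro Ck_on_sum Ck_on_scaleR finite_Basis)
      show "Ck_on k U (\<lambda>x. f' x v \<bullet> i)" for i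
        using f'(2) by (rule Ck_on_bounded_linear[OF bounded_linear_inner_left])
      show "Ck_on k U (\<lambda>x. g' (f x) i)" for i
        using Suc.IH[OF Suc.prems(1) g'(2) Ck_on_SucD[OF Suc.prems(3)] Suc.prems(4)] .
    qed
    moreover have "(\<Sum>i\<in>Basis. (f' x v \<bullet> i) *\<^sub>R g' (f x) i) = g' (f x) (f' x v)" if "x \<in> U" for x
      by (rule linear_eq_sum_Basis[OF has_derivative_linear[OF g'(1)[OF fV[OF that]]], symmetric])
    ultimately show "Ck_on k U (\<lambda>x. g' (f x) (f' x v))"
      by (rule Ck_on_cong[OF Suc.prems(1), rotated])
  qed
qed

lemma Ck_on_frechet_derivative_joint:
  fixes f :: "'a::euclidean_space \<Rightarrow> 'b::euclidean_space"
  assumes "open U" "Ck_on (Suc k) U f"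
  shows "Ck_on k (U \<times> UNIV) (\<lambda>p. frechet_derivative f (at (fst p)) (snd p))"
proof -
  obtain f' where f': "\<And>x. x \<in> U \<Longrightarrow> (f has_derivative f' x) (at x)" "\<And>v. Ck_on k U (\<lambda>x. f' x v)"
    using assms(2) by auto
  have open_dom: "open (U \<times> (UNIV :: 'a set))" using assms(1) by (simp add: open_Times)
  have "Ck_on k (U \<times> (UNIV :: 'a set)) (\<lambda>p. \<Sum>i\<in>Basis. (snd p \<bullet> i) *\<^sub>R f' (fst p) i)"
  proof (intro Ck_on_sum Ck_on_scaleR finite_Basis)
    show "Ck_on k (U \<times> (UNIV :: 'a set)) (\<lambda>p. snd p \<bullet> i)" for i :: 'a
      by (intro Ck_on_bounded_linear[OF bounded_linear_inner_left] Ck_on_snd Ck_on_id)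
    show "Ck_on k (U \<times> (UNIV :: 'a set)) (\<lambda>p. f' (fst p) i)" for i :: 'a
      using Ck_on_compose[OF open_dom f'(2)[of i] Ck_on_fst[OF Ck_on_id]] by auto
  qed
  moreover have
      "(\<Sum>i\<in>Basis. (snd p \<bullet> i) *\<^sub>R f' (fst p) i) = frechet_derivative f (at (fst p)) (snd p)"
    if "p \<in> U \<times> UNIV" for p
  proof -
    have x: "fst p \<in> U" using that by auto
    show ?thesis
      unfolding frechet_derivative_at[OF f'(1)[OF x], symmetric]
      by (rule linear_eq_sum_Basis[OF has_derivative_linear[OF f'(1)[OF x]], symmetric])
  qed
  ultimately show ?thesis by (rule Ck_on_cong[OF open_dom, rotated])
qed

lemma smooth_on_iff_Ck_on: assumes "open U" shows "smooth_on U f \<longleftrightarrow> (\<forall>k. Ck_on k U f)"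
proof
  assume "smooth_on U f"
  then obtain D where D: "D [] = f" "\<And>ds x. x \<in> U \<Longrightarrow> (D ds has_derivative (\<lambda>v. D (v # ds) x)) (at x)"
    unfolding smooth_on_def by blast
  have "Ck_on k U (D ds)" for k ds
  proof (induction k arbitrary: ds)
    case 0
    have "isCont (D ds) x" if "x \<in> U" for x using has_derivative_continuous[OF D(2)[OF that]] .
    thus ?case by (simp add: continuous_at_imp_continuous_on)
  next
    case (Suc k) show ?case by (rule Ck_onI[where f'="\<lambda>x v. D (v # ds) x"]) (use D(2) Suc in auto)
  qed
  thus "\<forall>k. Ck_on k U f" using D(1) by metis
next
  assume Ck: "\<forall>k. Ck_on k U f"
  define D where "D ds = foldr (\<lambda>v g x. frechet_derivative g (at x) v) ds f" for ds
  have D_Cons: "D (v # ds) = (\<lambda>x. frechet_derivative (D ds) (at x) v)" for v ds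
    by (simp add: D_def)
  have Ck_D: "Ck_on k U (D ds)" for k ds
  proof (induction ds arbitrary: k)
    case Nil show ?case using Ck by (simp add: D_def)
  next
    case (Cons v ds) show ?case
      unfolding D_Cons by (rule Ck_on_frechet_derivative[OF assms Cons.IH])
  qed
  have "(D ds has_derivative (\<lambda>v. D (v # ds) x)) (at x)" if "x \<in> U" for ds x
    using Ck_on_has_derivative[OF Ck_D[of "Suc 0"] that] by (simp add: D_Cons)
  moreover have "D [] = f" by (simp add: D_def)
  ultimately show "smooth_on U f" unfolding smooth_on_def by blast
qed

section \<open>Estimates\<close>

lemma linear_family_bounded_on_compact:
  fixes F :: "'a::metric_space \<Rightarrow> 'b::euclidean_space \<Rightarrow> 'c::real_normed_vector"
  assumes "compact S" "\<And>b. b \<in> Basis \<Longrightarrow> continuous_on S (\<lambda>y. F y b)" "\<And>y. y \<in> S \<Longrightarrow> linear (F y)"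
  shows "\<exists>C\<ge>0. \<forall>y\<in>S. \<forall>v. norm (F y v) \<le> C * norm v"
proof -
  have "continuous_on S (\<lambda>y. \<Sum>b\<in>Basis. norm (F y b))"
    using assms(2) by (intro continuous_on_sum continuous_on_norm) auto
  hence "bounded ((\<lambda>y. \<Sum>b\<in>Basis. norm (F y b)) ` S)"
    by (rule compact_imp_bounded[OF compact_continuous_image[OF _ assms(1)]])
  then obtain C where "C > 0" and C: "\<And>y. y \<in> S \<Longrightarrow> norm (\<Sum>b\<in>Basis. norm (F y b)) \<le> C"
    unfolding bounded_pos by auto
  have "norm (F y v) \<le> C * norm v" if y: "y \<in> S" for y v
  proof -
    have "norm (F y v) \<le> (\<Sum>b\<in>Basis. norm ((v \<bullet> b) *\<^sub>R F y b))"
      unfolding linear_eq_sum_Basis[OF assms(3)[OF y], of v] by (rule norm_sum)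
    also have "\<dots> \<le> (\<Sum>b\<in>Basis. norm v * norm (F y b))"
      by (intro sum_mono) (simp add: Basis_le_norm mult_right_mono)
    also have "\<dots> = norm v * (\<Sum>b\<in>Basis. norm (F y b))" by (simp add: sum_distrib_left)
    also have "\<dots> \<le> norm v * C" using C[OF y] by (intro mult_left_mono) auto
    finally show ?thesis by (simp add: mult.commute)
  qed
  thus ?thesis using \<open>C > 0\<close> by (intro exI[of _ C]) auto
qed

lemma linear_family_lipschitz_on_compact_convex:
  fixes F :: "'a::euclidean_space \<Rightarrow> 'b::euclidean_space \<Rightarrow> 'c::euclidean_space"
  assumes "compact S" "convex S" "\<And>b. b \<in> Basis \<Longrightarrow> Ck_on (Suc 0) UNIV (\<lambda>y. F y b)"
    and "\<And>y. linear (F y)"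
  shows "\<exists>L\<ge>0. \<forall>y\<in>S. \<forall>y'\<in>S. \<forall>v. norm (F y v - F y' v) \<le> L * norm v * norm (y - y')"
proof -
  have "\<exists>L\<ge>0. \<forall>y\<in>S. \<forall>y'\<in>S. norm (F y b - F y' b) \<le> L * norm (y - y')" if b: "b \<in> Basis" for b
  proof -
    let ?D = "\<lambda>y. frechet_derivative (\<lambda>y. F y b) (at y)"
    have der: "((\<lambda>y. F y b) has_derivative ?D y) (at y)" for y
      by (rule Ck_on_has_derivative[OF assms(3)[OF b] UNIV_I])
    have "continuous_on S (\<lambda>y. ?D y c)" for c
      using Ck_on_imp_continuous_on[OF Ck_on_frechet_derivative[OF open_UNIV assms(3)[OF b]]]
      by (rule continuous_on_subset) simp
    then obtain L where "L \<ge> 0" and L: "\<And>y h. y \<in> S \<Longrightarrow> norm (?D y h) \<le> L * norm h"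
      using linear_family_bounded_on_compact[OF assms(1), of ?D] has_derivative_linear[OF der]
      by blast
    have "norm (F y b - F y' b) \<le> L * norm (y - y')" if "y \<in> S" "y' \<in> S" for y y'
      using assms(2) has_derivative_at_withinI[OF der] _ that
      by (rule differentiable_bound) (use L in \<open>auto intro: onorm_le\<close>)
    thus ?thesis using \<open>L \<ge> 0\<close> by blast
  qed
  then obtain L where L: "\<And>b. b \<in> Basis \<Longrightarrow> L b \<ge> 0"
    "\<And>b y y'. b \<in> Basis \<Longrightarrow> y \<in> S \<Longrightarrow> y' \<in> S \<Longrightarrow> norm (F y b - F y' b) \<le> L b * norm (y - y')"
    by metis
  have "norm (F y v - F y' v) \<le> (\<Sum>b\<in>Basis. L b) * norm v * norm (y - y')"
    if y: "y \<in> S" "y' \<in> S" for y y' v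
  proof -
    have "F y v - F y' v = (\<Sum>b\<in>Basis. (v \<bullet> b) *\<^sub>R (F y b - F y' b))"
      by (simp add: linear_eq_sum_Basis[OF assms(4), of _ v] scaleR_diff_right sum_subtractf)
    also have "norm \<dots> \<le> (\<Sum>b\<in>Basis. norm v * (L b * norm (y - y')))"
      by (intro norm_sum[THEN order_trans] sum_mono)
        (simp add: Basis_le_norm L(2)[OF _ y] mult_mono')
    finally show ?thesis by (simp add: sum_distrib_left sum_distrib_right mult_ac)
  qed
  thus ?thesis using L(1) by (intro exI[of _ "\<Sum>b\<in>Basis. L b"]) (auto intro: sum_nonneg)
qed

definition gronwall_const :: "real \<Rightarrow> real" where
  "gronwall_const \<beta> = 2 * 4 ^ (nat \<lceil>2 * \<beta>\<rceil> + 1)"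

lemma norm_le_on_short_interval:
  fixes e e' :: "real \<Rightarrow> 'a::real_normed_vector"
  assumes "0 \<le> \<alpha>" "0 \<le> \<beta>" "0 \<le> h" "\<beta> * h \<le> 1 / 2"
    and der: "\<And>t. t \<in> {a..a + h} \<Longrightarrow> (e has_vector_derivative e' t) (at t within {a..a + h})"
    and bd: "\<And>t. t \<in> {a..a + h} \<Longrightarrow> norm (e' t) \<le> \<alpha> + \<beta> * norm (e t)"
    and t: "t \<in> {a..a + h}"
  shows "norm (e t) \<le> 2 * norm (e a) + 2 * \<alpha> * h"
proof -
  have "continuous_on {a..a + h} e"
    using der by (intro has_derivative_continuous_on) (auto simp: has_vector_derivative_def)
  then obtain s where s: "s \<in> {a..a + h}" and max: "\<And>t. t \<in> {a..a + h} \<Longrightarrow> norm (e t) \<le> norm (e s)"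
    using continuous_attains_sup[OF compact_Icc _ continuous_on_norm] t by (metis empty_iff)
  define M where "M = norm (e s)"
  have "norm (e s - e a) \<le> (\<alpha> + \<beta> * M) * norm (s - a)"
  proof (rule differentiable_bound[where f'="\<lambda>t d. d *\<^sub>R e' t" and S="{a..s}"])
    fix x assume "x \<in> {a..s}"
    hence x: "x \<in> {a..a + h}" using s by auto
    show "(e has_derivative (\<lambda>d. d *\<^sub>R e' x)) (at x within {a..s})"
      using der[OF x] s by (auto simp: has_vector_derivative_def intro: has_derivative_subset)
    have "norm (e' x) \<le> \<alpha> + \<beta> * M"
      using bd[OF x] mult_left_mono[OF max[OF x] assms(2)] unfolding M_def by linarith
    thus "onorm (\<lambda>d. d *\<^sub>R e' x) \<le> \<alpha> + \<beta> * M"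
      by (intro onorm_le) (simp add: mult.commute mult_left_mono)
  qed (use s in auto)
  also have "\<dots> \<le> (\<alpha> + \<beta> * M) * h"
    using s assms(1,2) unfolding M_def by (intro mult_left_mono) auto
  finally have "M \<le> norm (e a) + \<alpha> * h + (\<beta> * h) * M"
    using norm_triangle_sub[of "e s" "e a"] unfolding M_def by (simp add: algebra_simps)
  moreover have "(\<beta> * h) * M \<le> M / 2"
    using mult_right_mono[OF assms(4), of M] unfolding M_def by simp
  ultimately show ?thesis using max[OF t] unfolding M_def by linarith
qed

text \<open>On \<open>[0, n h]\<close> with \<open>\<beta> h \<le> 1 / 2\<close>, each further step of length \<open>h\<close> at most quadruples
  the bound.\<close>
lemma norm_le_on_subdivision:
  fixes e e' :: "real \<Rightarrow> 'a::real_normed_vector" and h :: real and n i :: nat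
  assumes "0 \<le> \<alpha>" "0 \<le> \<beta>" "0 < h" "\<beta> * h \<le> 1 / 2" "e 0 = 0"
    and der: "\<And>t. t \<in> {0..real n * h} \<Longrightarrow>
      (e has_vector_derivative e' t) (at t within {0..real n * h})"
    and bd: "\<And>t. t \<in> {0..real n * h} \<Longrightarrow> norm (e' t) \<le> \<alpha> + \<beta> * norm (e t)"
    and "i \<le> n" "t \<in> {0..real i * h}"
  shows "norm (e t) \<le> 4 ^ i * 2 * h * \<alpha>"
  using assms(8,9)
proof (induction i arbitrary: t)
  case 0 thus ?case using assms(1,3,5) by auto
next
  case (Suc i)
  let ?a = "real i * h"
  have "real (Suc i) * h \<le> real n * h" using Suc.prems(1) assms(3) by (intro mult_right_mono) auto
  hence sub: "{?a..?a + h} \<subseteq> {0..real n * h}" using assms(3) by (auto simp: distrib_right)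
  have IH: "norm (e t) \<le> 4 ^ i * 2 * h * \<alpha>" if "t \<in> {0..?a}" for t
    using Suc.IH Suc.prems(1) that by simp
  have "norm (e t) \<le> 2 * norm (e ?a) + 2 * \<alpha> * h" if "t \<in> {?a..?a + h}" for t
  proof (rule norm_le_on_short_interval[where e'=e',
        OF assms(1,2) less_imp_le[OF assms(3)] assms(4) _ _ that])
    fix s assume "s \<in> {?a..?a + h}"
    hence s: "s \<in> {0..real n * h}" using sub by blast
    show "(e has_vector_derivative e' s) (at s within {?a..?a + h})"
      by (rule has_vector_derivative_within_subset[OF der[OF s] sub])
    show "norm (e' s) \<le> \<alpha> + \<beta> * norm (e s)" by (rule bd[OF s])
  qed
  also have "2 * norm (e ?a) + 2 * \<alpha> * h \<le> 4 ^ Suc i * 2 * h * \<alpha>"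
  proof -
    have "norm (e ?a) \<le> 2 * (4 ^ i * (\<alpha> * h))" using IH[of ?a] assms(3) by (simp add: mult_ac)
    moreover have "0 \<le> \<alpha> * h" "\<alpha> * h \<le> 4 ^ i * (\<alpha> * h)"
      using mult_right_mono[of 1 "4 ^ i" "\<alpha> * h"] assms(1,3) by auto
    moreover have "4 ^ Suc i * 2 * h * \<alpha> = 8 * (4 ^ i * (\<alpha> * h))" by (simp add: mult_ac)
    ultimately show ?thesis by (simp only: mult.assoc)
  qed
  finally have new: "norm (e t) \<le> 4 ^ Suc i * 2 * h * \<alpha>" if "t \<in> {?a..?a + h}" for t
    using that by blast
  have "(4::real) ^ i * 2 * h * \<alpha> \<le> 4 ^ Suc i * 2 * h * \<alpha>"
    using assms(1,3) by (intro mult_right_mono) auto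
  hence old: "norm (e t) \<le> 4 ^ Suc i * 2 * h * \<alpha>" if "t \<in> {0..?a}" for t
    using IH[OF that] by linarith
  show ?case
  proof (cases "t \<le> ?a")
    case True thus ?thesis using old Suc.prems(2) by auto
  next
    case False thus ?thesis using new Suc.prems(2) by (auto simp: distrib_right)
  qed
qed

lemma norm_le_gronwall_const_on_interval:
  fixes e e' :: "real \<Rightarrow> 'a::real_normed_vector"
  assumes "0 \<le> \<alpha>" "0 \<le> \<beta>" "0 < T" "T \<le> 1" "e 0 = 0"
    and der: "\<And>t. t \<in> {0..T} \<Longrightarrow> (e has_vector_derivative e' t) (at t within {0..T})"
    and bd: "\<And>t. t \<in> {0..T} \<Longrightarrow> norm (e' t) \<le> \<alpha> + \<beta> * norm (e t)"
    and t: "t \<in> {0..T}"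
  shows "norm (e t) \<le> gronwall_const \<beta> * \<alpha>"
proof -
  define n where "n = nat \<lceil>2 * \<beta>\<rceil> + 1"
  define h where "h = T / n"
  have n: "n \<ge> 1" "real n \<ge> 2 * \<beta>" unfolding n_def by linarith+
  have h: "0 < h" "h \<le> 1" "real n * h = T" unfolding h_def using assms(3,4) n(1)
    by (auto simp: divide_le_eq)
  have "\<beta> * h \<le> \<beta> / n" unfolding h_def using assms(2,4) n(1)
    by (auto simp: divide_right_mono mult_left_le)
  also have "\<dots> \<le> 1 / 2" using n by (simp add: field_simps)
  finally have "norm (e t) \<le> 4 ^ n * 2 * h * \<alpha>"
    using norm_le_on_subdivision[where e=e and e'=e' and n=n, OF assms(1,2) h(1) _ assms(5)]
      der bd t h(3)
    by auto
  also have "\<dots> \<le> 4 ^ n * 2 * \<alpha>"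
    using mult_right_mono[OF h(2) assms(1)] by (simp add: mult.assoc)
  finally show ?thesis unfolding gronwall_const_def n_def by simp
qed

text \<open>The bound on \<open>e'\<close> is only assumed while \<open>norm (e t) \<le> 1\<close>: at a first time where
  \<open>norm (e t) = 1\<close>, \<open>norm_le_gronwall_const_on_interval\<close> would already give
  \<open>norm (e t) < 1\<close>.\<close>
lemma norm_le_gronwall_const:
  fixes e e' :: "real \<Rightarrow> 'a::real_normed_vector"
  assumes "0 \<le> \<alpha>" "0 \<le> \<beta>" "e 0 = 0" and small: "gronwall_const \<beta> * \<alpha> < 1"
    and der: "\<And>t. t \<in> {0..1} \<Longrightarrow> (e has_vector_derivative e' t) (at t within {0..1})"
    and bd: "\<And>t. t \<in> {0..1} \<Longrightarrow> norm (e t) \<le> 1 \<Longrightarrow> norm (e' t) \<le> \<alpha> + \<beta> * norm (e t)"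
    and t: "t \<in> {0..1}"
  shows "norm (e t) \<le> gronwall_const \<beta> * \<alpha>"
proof -
  have cont: "continuous_on {0..1} e"
    using der by (intro has_derivative_continuous_on) (auto simp: has_vector_derivative_def)
  define S where "S = {0..1} \<inter> (\<lambda>t. norm (e t)) -` {1..}"
  have "S = {}"
  proof (rule ccontr)
    assume "S \<noteq> {}"
    moreover have "closed S" unfolding S_def
      by (intro continuous_closed_preimage continuous_on_norm cont) auto
    hence "compact S" using compact_Int_closed[of "{0..1::real}" S] unfolding S_def by auto
    ultimately obtain T1 where T1: "T1 \<in> S" "\<And>t. t \<in> S \<Longrightarrow> T1 \<le> t"
      using compact_attains_inf by metis
    have T1i: "0 \<le> T1" "T1 \<le> 1" "1 \<le> norm (e T1)" using T1(1) unfolding S_def by auto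
    obtain s where s: "0 \<le> s" "s \<le> T1" "norm (e s) = 1"
      using IVT'[of "\<lambda>t. norm (e t)" 0 1 T1] T1i assms(3)
        continuous_on_norm[OF continuous_on_subset[OF cont]] by auto
    hence "s \<in> S" using T1i unfolding S_def by auto
    hence eT1: "norm (e T1) = 1" using T1(2) s by force
    hence "T1 > 0" using T1i assms(3) by (cases "T1 = 0") auto
    have le1: "norm (e t) \<le> 1" if "t \<in> {0..T1}" for t
    proof (cases "t = T1")
      case False
      hence "t \<notin> S" using T1(2) that by force
      thus ?thesis using that T1i unfolding S_def by auto
    qed (use eT1 in simp)
    have "norm (e T1) \<le> gronwall_const \<beta> * \<alpha>"
      by (rule norm_le_gronwall_const_on_interval[where e=e and e'=e',
            OF assms(1,2) \<open>T1 > 0\<close> T1i(2) assms(3)])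
        (use T1i le1 in \<open>auto intro: bd has_vector_derivative_within_subset[OF der]\<close>)
    thus False using eT1 small by simp
  qed
  hence "norm (e t) \<le> 1" if "t \<in> {0..1}" for t using that unfolding S_def by fastforce
  thus ?thesis
    by (intro norm_le_gronwall_const_on_interval[where e=e and e'=e',
          OF assms(1,2) zero_less_one order_refl assms(3) der _ t] bd)
qed

section \<open>Graded groups in exponential coordinates\<close>

locale graded_lie_group =
  fixes m :: "'g::euclidean_space \<Rightarrow> 'g \<Rightarrow> 'g" and V :: "nat \<Rightarrow> 'g set"
  assumes graded_group: "graded_group m V"
begin

sublocale grading V
  using graded_group unfolding graded_group_def by unfold_locales blast

lemma mul_assoc: "m (m x y) z = m x (m y z)"
  using graded_group unfolding graded_group_def by blast

lemma mul_scaleR_scaleR: "m (s *\<^sub>R X) (t *\<^sub>R X) = (s + t) *\<^sub>R X"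
  using graded_group unfolding graded_group_def by blast

lemma dil_mul: "r > 0 \<Longrightarrow> dil V r (m x y) = m (dil V r x) (dil V r y)"
  using graded_group unfolding graded_group_def by blast

lemma Ck_on_mul: "Ck_on k UNIV (\<lambda>p. m (fst p) (snd p))"
  using graded_group smooth_on_iff_Ck_on[OF open_UNIV] unfolding graded_group_def by blast

lemma mul_0_left [simp]: "m 0 y = y"
  using mul_scaleR_scaleR[of 0 y 1] by simp

lemma mul_0_right [simp]: "m y 0 = y"
  using mul_scaleR_scaleR[of 1 y 0] by simp

lemma mul_neg_left [simp]: "m (- y) y = 0"
  using mul_scaleR_scaleR[of "-1" y 1] by simp

lemma mul_neg_right [simp]: "m y (- y) = 0"
  using mul_scaleR_scaleR[of 1 y "-1"] by simp

lemma mul_neg_cancel_left [simp]: "m (- a) (m a w) = w"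
  by (simp flip: mul_assoc)

lemma mul_cancel_neg_left [simp]: "m a (m (- a) w) = w"
  by (simp flip: mul_assoc)

lemma continuous_on_mul: "continuous_on S (\<lambda>p. m (fst p) (snd p))"
  using Ck_on_imp_continuous_on[OF Ck_on_mul[of 0]] continuous_on_subset by blast

definition dleft :: "'g \<Rightarrow> 'g \<Rightarrow> 'g \<Rightarrow> 'g" where
  "dleft a w v = frechet_derivative (\<lambda>p. m (fst p) (snd p)) (at (a, w)) (0, v)"

lemma has_derivative_left_translation: "(m a has_derivative dleft a w) (at w)"
proof -
  have "((\<lambda>p. m (fst p) (snd p)) has_derivative
      frechet_derivative (\<lambda>p. m (fst p) (snd p)) (at (a, w))) (at (a, w))"
    by (rule Ck_on_has_derivative[OF Ck_on_mul[of "Suc 0"] UNIV_I])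
  moreover have "((\<lambda>w. (a, w)) has_derivative (\<lambda>v. (0, v))) (at w)"
    by (intro derivative_eq_intros) auto
  ultimately show ?thesis
    unfolding dleft_def[abs_def] using has_derivative_compose by fastforce
qed

lemma linear_dleft: "linear (dleft a w)"
  using has_derivative_linear[OF has_derivative_left_translation] .

lemma Ck_on_dleft:
  assumes "open S" "Ck_on k S a" "Ck_on k S w" "Ck_on k S v"
  shows "Ck_on k S (\<lambda>x. dleft (a x) (w x) (v x))"
proof -
  have "Ck_on k (UNIV \<times> UNIV) (\<lambda>q. frechet_derivative (\<lambda>p. m (fst p) (snd p)) (at (fst q)) (snd q))"
    by (rule Ck_on_frechet_derivative_joint[OF open_UNIV Ck_on_mul])
  moreover have "Ck_on k S (\<lambda>x. ((a x, w x), (0, v x)))"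
    by (intro Ck_on_Pair assms(2-4) Ck_on_const)
  ultimately show ?thesis
    unfolding dleft_def using Ck_on_compose[OF assms(1)] by fastforce
qed

lemma dleft_0_0 [simp]: "dleft 0 0 v = v"
proof -
  have "m 0 = (\<lambda>v. v)" by auto
  hence "(m 0 has_derivative (\<lambda>v. v)) (at 0)" by (simp add: has_derivative_ident)
  thus ?thesis using has_derivative_unique[OF has_derivative_left_translation] by metis
qed

lemma tau_eq_dleft: "tau m a = dleft a 0"
  unfolding tau_def by (rule frechet_derivative_at[OF has_derivative_left_translation, symmetric])

lemma dleft_comp: "dleft a b (dleft b 0 v) = dleft (m a b) 0 v"
proof -
  have "((\<lambda>w. m a (m b w)) has_derivative (\<lambda>v. dleft a (m b 0) (dleft b 0 v))) (at 0)"
    by (rule has_derivative_compose[OF has_derivative_left_translation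
          has_derivative_left_translation])
  moreover have "((\<lambda>w. m a (m b w)) has_derivative dleft (m a b) 0) (at 0)"
    unfolding mul_assoc[symmetric] by (rule has_derivative_left_translation)
  ultimately have "(\<lambda>v. dleft a (m b 0) (dleft b 0 v)) = dleft (m a b) 0"
    by (rule has_derivative_unique)
  thus ?thesis by (simp add: fun_eq_iff)
qed

lemma dleft_neg_right_inverse: "dleft a 0 (dleft (- a) a v) = v"
proof -
  have "((\<lambda>w. m a (m (- a) w)) has_derivative (\<lambda>v. dleft a (m (- a) a) (dleft (- a) a v))) (at a)"
    by (rule has_derivative_compose[OF has_derivative_left_translation
          has_derivative_left_translation])
  moreover have "((\<lambda>w. m a (m (- a) w)) has_derivative (\<lambda>v. v)) (at a)"
    by (simp only: mul_cancel_neg_left) (rule has_derivative_ident)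
  ultimately have "(\<lambda>v. dleft a (m (- a) a) (dleft (- a) a v)) = (\<lambda>v. v)"
    by (rule has_derivative_unique)
  thus ?thesis by (simp add: fun_eq_iff)
qed

lemma dleft_neg_left_inverse: "dleft (- a) a (dleft a 0 v) = v"
proof -
  have "((\<lambda>w. m (- a) (m a w)) has_derivative (\<lambda>v. dleft (- a) (m a 0) (dleft a 0 v))) (at 0)"
    by (rule has_derivative_compose[OF has_derivative_left_translation
          has_derivative_left_translation])
  moreover have "((\<lambda>w. m (- a) (m a w)) has_derivative (\<lambda>v. v)) (at 0)"
    by (simp only: mul_neg_cancel_left) (rule has_derivative_ident)
  ultimately have "(\<lambda>v. dleft (- a) (m a 0) (dleft a 0 v)) = (\<lambda>v. v)"
    by (rule has_derivative_unique)
  thus ?thesis by (simp add: fun_eq_iff)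
qed

lemma inv_tau: "inv (tau m a) = dleft (- a) a"
  unfolding tau_eq_dleft
  by (rule inv_unique_comp) (auto simp: fun_eq_iff dleft_neg_right_inverse dleft_neg_left_inverse)

lemma dleft_eq_dleft_0: "dleft a b v = dleft (m a b) 0 (dleft (- b) b v)"
  using dleft_comp[of a b "dleft (- b) b v"] by (simp add: dleft_neg_right_inverse)

lemma dil_dleft_0:
  assumes "r > 0" shows "dil V r (dleft b 0 v) = dleft (dil V r b) 0 (dil V r v)"
proof -
  have "((\<lambda>w. dil V r (m b w)) has_derivative (\<lambda>v. dil V r (dleft b 0 v))) (at 0)"
    by (rule bounded_linear.has_derivative[OF bounded_linear_dil has_derivative_left_translation])
  moreover have "((\<lambda>w. m (dil V r b) (dil V r w)) has_derivative
      (\<lambda>v. dleft (dil V r b) (dil V r 0) (dil V r v))) (at 0)"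
    by (rule has_derivative_compose[OF bounded_linear_imp_has_derivative[OF bounded_linear_dil]
          has_derivative_left_translation])
  hence "((\<lambda>w. dil V r (m b w)) has_derivative
      (\<lambda>v. dleft (dil V r b) (dil V r 0) (dil V r v))) (at 0)"
    by (simp only: dil_mul[OF assms, symmetric])
  ultimately have "(\<lambda>v. dil V r (dleft b 0 v)) = (\<lambda>v. dleft (dil V r b) (dil V r 0) (dil V r v))"
    by (rule has_derivative_unique)
  thus ?thesis by (simp add: fun_eq_iff dil_zero)
qed

lemma dleft_scaleR_self: "dleft (t *\<^sub>R w) 0 w = w"
proof -
  have "((\<lambda>s. s *\<^sub>R w) has_derivative (\<lambda>h. h *\<^sub>R w)) (at 0)"
    by (intro derivative_eq_intros) auto
  from has_derivative_compose[OF this has_derivative_left_translation]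
  have "((\<lambda>s. m (t *\<^sub>R w) (s *\<^sub>R w)) has_derivative (\<lambda>h. dleft (t *\<^sub>R w) 0 (h *\<^sub>R w))) (at 0)"
    by simp
  moreover have "((\<lambda>s. m (t *\<^sub>R w) (s *\<^sub>R w)) has_derivative (\<lambda>h. h *\<^sub>R w)) (at 0)"
    unfolding mul_scaleR_scaleR by (auto intro!: derivative_eq_intros)
  ultimately show ?thesis using has_derivative_unique by (metis scaleR_one)
qed

end
lemma (in graded_lie_group) dleft_bounds_on_cball:
  obtains C L where "C \<ge> 0" "L \<ge> 0"
    "\<And>y v. y \<in> cball 0 R \<Longrightarrow> norm (dleft y 0 v) \<le> C * norm v"
    "\<And>y y' v. y \<in> cball 0 R \<Longrightarrow> y' \<in> cball 0 R \<Longrightarrow>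
       norm (dleft y 0 v - dleft y' 0 v) \<le> L * norm v * norm (y - y')"
proof -
  have Ck_dleft: "Ck_on k UNIV (\<lambda>y. dleft y 0 b)" for k b
    by (rule Ck_on_dleft[OF open_UNIV Ck_on_id Ck_on_const Ck_on_const])
  have "continuous_on (cball 0 R) (\<lambda>y. dleft y 0 b)" for b
    using Ck_on_imp_continuous_on[OF Ck_dleft[of 0 b]] by (rule continuous_on_subset) simp
  hence "\<exists>C\<ge>0. \<forall>y\<in>cball 0 R. \<forall>v. norm (dleft y 0 v) \<le> C * norm v"
    by (intro linear_family_bounded_on_compact compact_cball linear_dleft)
  moreover have "\<exists>L\<ge>0. \<forall>y\<in>cball 0 R. \<forall>y'\<in>cball 0 R. \<forall>v.
      norm (dleft y 0 v - dleft y' 0 v) \<le> L * norm v * norm (y - y')"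
    by (intro linear_family_lipschitz_on_compact_convex compact_cball convex_cball Ck_dleft
        linear_dleft)
  ultimately show thesis using that by blast
qed

text \<open>\<open>u s\<close> is the left-trivialised velocity of \<open>\<gamma>\<close>. Since \<open>dleft (s *\<^sub>R a) 0 a = a\<close>, the
  one-parameter subgroup \<open>s \<mapsto> s *\<^sub>R a\<close> has constant velocity \<open>a\<close>, and the error
  \<open>\<gamma> s - s *\<^sub>R a\<close> obeys a Gronwall-type inequality.\<close>
lemma (in graded_lie_group) close_to_one_parameter_subgroup:
  assumes "0 \<le> Am"
  obtains C where "C > 0" and
    "\<And>a \<gamma> u \<rho>. norm a \<le> Am \<Longrightarrow> \<gamma> 0 = 0 \<Longrightarrow> C * \<rho> < 1 \<Longrightarrow>
       (\<And>s. s \<in> {0..1} \<Longrightarrow> (\<gamma> has_vector_derivative dleft (\<gamma> s) 0 (u s)) (at s within {0..1})) \<Longrightarrow>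
       (\<And>s. s \<in> {0..1} \<Longrightarrow> norm (u s - a) \<le> \<rho>) \<Longrightarrow>
       norm (\<gamma> 1 - a) \<le> C * \<rho>"
proof -
  define R where "R = Am + 1"
  obtain C1 Lp where "C1 \<ge> 0" "Lp \<ge> 0"
    and C1: "\<And>y v. y \<in> cball 0 R \<Longrightarrow> norm (dleft y 0 v) \<le> C1 * norm v"
    and Lp: "\<And>y y' v. y \<in> cball 0 R \<Longrightarrow> y' \<in> cball 0 R \<Longrightarrow>
      norm (dleft y 0 v - dleft y' 0 v) \<le> Lp * norm v * norm (y - y')"
    by (rule dleft_bounds_on_cball[where R=R]) (rule that)
  define \<beta> where "\<beta> = Lp * Am"
  define C where "C = gronwall_const \<beta> * (C1 + 1)"
  have "C > 0" unfolding C_def gronwall_const_def using \<open>C1 \<ge> 0\<close> by simp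
  moreover have "norm (\<gamma> 1 - a) \<le> C * \<rho>"
    if a: "norm a \<le> Am" and \<gamma>0: "\<gamma> 0 = 0" and small: "C * \<rho> < 1"
      and der: "\<And>s. s \<in> {0..1} \<Longrightarrow> (\<gamma> has_vector_derivative dleft (\<gamma> s) 0 (u s)) (at s within {0..1})"
      and u: "\<And>s. s \<in> {0..1} \<Longrightarrow> norm (u s - a) \<le> \<rho>"
    for a \<gamma> u \<rho>
  proof -
    have "0 \<le> \<rho>" using order_trans[OF norm_ge_zero u[of 0]] by simp
    define e where "e s = \<gamma> s - s *\<^sub>R a" for s
    define e' where "e' s = dleft (\<gamma> s) 0 (u s) - a" for s
    have "C1 * \<rho> \<le> (C1 + 1) * \<rho>" using \<open>0 \<le> \<rho>\<close> by (simp add: distrib_right)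
    hence "gronwall_const \<beta> * (C1 * \<rho>) \<le> gronwall_const \<beta> * ((C1 + 1) * \<rho>)"
      by (rule mult_left_mono) (simp add: gronwall_const_def)
    hence gc: "gronwall_const \<beta> * (C1 * \<rho>) \<le> C * \<rho>" by (simp add: C_def mult.assoc)
    have "norm (e 1) \<le> gronwall_const \<beta> * (C1 * \<rho>)"
    proof (rule norm_le_gronwall_const[where e'=e'])
      show "0 \<le> C1 * \<rho>" "0 \<le> \<beta>" "e 0 = 0"
        using \<open>C1 \<ge> 0\<close> \<open>0 \<le> \<rho>\<close> \<open>Lp \<ge> 0\<close> assms \<gamma>0 unfolding \<beta>_def e_def by auto
      show "gronwall_const \<beta> * (C1 * \<rho>) < 1" using gc small by linarith
      show "(e has_vector_derivative e' s) (at s within {0..1})" if "s \<in> {0..1}" for s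
        unfolding e_def[abs_def] e'_def
        by (intro has_vector_derivative_diff der[OF that])
          (auto intro!: derivative_eq_intros simp: has_vector_derivative_def)
      show "norm (e' s) \<le> C1 * \<rho> + \<beta> * norm (e s)" if s: "s \<in> {0..1}" and e1: "norm (e s) \<le> 1" for s
      proof -
        have "norm (s *\<^sub>R a) = s * norm a" using s by simp
        also have "\<dots> \<le> 1 * Am" using s a by (intro mult_mono) auto
        finally have sa: "norm (s *\<^sub>R a) \<le> Am" by simp
        have "norm (\<gamma> s) \<le> R"
          using norm_triangle_le[of "e s" "s *\<^sub>R a"] e1 sa unfolding R_def e_def by auto
        hence y: "\<gamma> s \<in> cball 0 R" "s *\<^sub>R a \<in> cball 0 R" using sa unfolding R_def by auto
        have "e' s = dleft (\<gamma> s) 0 (u s - a) + (dleft (\<gamma> s) 0 a - dleft (s *\<^sub>R a) 0 a)"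
          unfolding e'_def dleft_scaleR_self linear_diff[OF linear_dleft] by simp
        also have "norm \<dots> \<le> C1 * norm (u s - a) + Lp * norm a * norm (e s)"
          using norm_triangle_le[OF add_mono[OF C1[OF y(1), of "u s - a"] Lp[OF y, of a]]]
          unfolding e_def .
        also have "\<dots> \<le> C1 * \<rho> + \<beta> * norm (e s)"
          unfolding \<beta>_def using u[OF s] a \<open>C1 \<ge> 0\<close> \<open>Lp \<ge> 0\<close>
          by (intro add_mono mult_left_mono mult_right_mono) auto
        finally show ?thesis .
      qed
    qed simp
    thus ?thesis using gc unfolding e_def by simp
  qed
  ultimately show thesis by (rule that)
qed

lemma (in graded_lie_group) continuous_on_ray:
  "continuous_on S (\<lambda>p :: real \<times> ('g \<times> 'g) \<times> real.
     m (fst (fst (snd p))) (dil V (fst p) (snd (snd p) *\<^sub>R snd (fst (snd p)))))"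
proof -
  have "continuous_on S (\<lambda>q::real \<times> ('g \<times> 'g) \<times> real.
      (\<lambda>p. dil V (fst p) (snd p)) (fst q, snd (snd q) *\<^sub>R snd (fst (snd q))))"
    by (rule continuous_on_compose2[OF continuous_on_dil]) (auto intro!: continuous_intros)
  hence "continuous_on S (\<lambda>q::real \<times> ('g \<times> 'g) \<times> real.
      (\<lambda>p. m (fst p) (snd p))
        (fst (fst (snd q)), dil V (fst q) (snd (snd q) *\<^sub>R snd (fst (snd q)))))"
    by (intro continuous_on_compose2[OF continuous_on_mul]) (auto intro!: continuous_intros)
  thus ?thesis by simp
qed

lemma (in graded_lie_group) rays_in_open_set:
  assumes "compact K" "open U" "K \<subseteq> U \<times> UNIV"
  obtains e0 where "e0 > 0"
    "\<And>e x z s. e \<in> {0..e0} \<Longrightarrow> (x, z) \<in> K \<Longrightarrow> s \<in> {0..1} \<Longrightarrow> m x (dil V e (s *\<^sub>R z)) \<in> U"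
proof -
  let ?Y = "\<lambda>p :: real \<times> ('g \<times> 'g) \<times> real.
    m (fst (fst (snd p))) (dil V (fst p) (snd (snd p) *\<^sub>R snd (fst (snd p))))"
  have "open (?Y -` U)" by (rule open_vimage[OF assms(2) continuous_on_ray])
  moreover have "{0} \<times> (K \<times> {0..1}) \<subseteq> ?Y -` U" using assms(3) by (auto simp: dil_0)
  ultimately have "\<exists>X0. 0 \<in> X0 \<and> open X0 \<and> X0 \<times> (K \<times> {0..1}) \<subseteq> ?Y -` U"
    by (intro Elementary_Topology.tube_lemma compact_Times assms(1) compact_Icc)
  then obtain X0 where X0: "0 \<in> X0" "open X0" "X0 \<times> (K \<times> {0..1}) \<subseteq> ?Y -` U" by blast
  obtain e0 where "e0 > 0" and "cball 0 e0 \<subseteq> X0" using open_contains_cball X0(1,2) by blast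
  hence "{0..e0} \<times> (K \<times> {0..1}) \<subseteq> ?Y -` U" using X0(3) by (fastforce simp: dist_real_def)
  thus thesis using that[OF \<open>e0 > 0\<close>] by fastforce
qed

section \<open>Pansu differentiability of smooth maps\<close>

lemma tendsto_scaleR_inverse_at_right_0:
  fixes g :: "real \<Rightarrow> 'a::real_normed_vector"
  assumes "(g has_vector_derivative L) (at 0)" "g 0 = 0"
  shows "((\<lambda>s. g s /\<^sub>R s) \<longlongrightarrow> L) (at_right 0)"
proof -
  have "((\<lambda>y. (1 / norm (y - 0)) *\<^sub>R (g y - (g 0 + (y - 0) *\<^sub>R L))) \<longlongrightarrow> 0) (at_right 0)"
    using has_derivative_subset[OF assms(1)[unfolded has_vector_derivative_def]]
    unfolding has_derivative_within by blast
  hence "((\<lambda>y. (1 / norm (y - 0)) *\<^sub>R (g y - (g 0 + (y - 0) *\<^sub>R L)) + L) \<longlongrightarrow> 0 + L) (at_right 0)"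
    by (intro tendsto_add tendsto_const)
  moreover have "\<forall>\<^sub>F y in at_right 0.
      (1 / norm (y - 0)) *\<^sub>R (g y - (g 0 + (y - 0) *\<^sub>R L)) + L = g y /\<^sub>R y"
    using eventually_at_right_less[of 0]
    by (rule eventually_mono) (auto simp: assms(2) algebra_simps divide_inverse)
  ultimately show ?thesis using tendsto_cong by force
qed

lemma filterlim_power_at_right_0: "0 < j \<Longrightarrow> filterlim (\<lambda>e::real. e ^ j) (at_right 0) (at_right 0)"
  unfolding filterlim_at
  by (auto intro!: tendsto_eq_intros eventually_mono[OF eventually_at_right_less[of 0]])

lemma (in grading) gcomp_eq_0_if_dil_quotient_converges:
  fixes g :: "real \<Rightarrow> 'g"
  assumes "(g has_vector_derivative L) (at 0)" "g 0 = 0" "0 < j" "j < k"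
    and lim: "((\<lambda>e. dil V (1 / e) (g (e ^ j))) \<longlongrightarrow> l) (at_right 0)"
  shows "gcomp V L k = 0"
proof -
  have "((\<lambda>e. g (e ^ j) /\<^sub>R e ^ j) \<longlongrightarrow> L) (at_right 0)"
    using filterlim_compose[OF tendsto_scaleR_inverse_at_right_0[OF assms(1,2)]
        filterlim_power_at_right_0[OF assms(3)]] .
  hence lim1: "((\<lambda>e. gcomp V (g (e ^ j) /\<^sub>R e ^ j) k) \<longlongrightarrow> gcomp V L k) (at_right 0)"
    by (rule bounded_linear.tendsto[OF bounded_linear_gcomp])
  have "((\<lambda>e. e ^ (k - j) *\<^sub>R gcomp V (dil V (1 / e) (g (e ^ j))) k) \<longlongrightarrow> 0 ^ (k - j) *\<^sub>R gcomp V l k)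
      (at_right 0)"
    by (intro tendsto_intros bounded_linear.tendsto[OF bounded_linear_gcomp lim])
  hence "((\<lambda>e. e ^ (k - j) *\<^sub>R gcomp V (dil V (1 / e) (g (e ^ j))) k) \<longlongrightarrow> 0) (at_right 0)"
    using assms(4) by (simp add: power_0_left)
  moreover have "\<forall>\<^sub>F e in at_right 0.
      e ^ (k - j) *\<^sub>R gcomp V (dil V (1 / e) (g (e ^ j))) k = gcomp V (g (e ^ j) /\<^sub>R e ^ j) k"
    using eventually_at_right_less[of 0]
  proof (rule eventually_mono)
    fix e :: real assume "0 < e"
    moreover have "e ^ k = e ^ (k - j) * e ^ j" using assms(4) by (simp flip: power_add)
    ultimately have "e ^ (k - j) * (1 / e) ^ k = 1 / e ^ j" by (simp add: field_simps)
    thus "e ^ (k - j) *\<^sub>R gcomp V (dil V (1 / e) (g (e ^ j))) k = gcomp V (g (e ^ j) /\<^sub>R e ^ j) k"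
      by (simp add: gcomp_dil gcomp_scaleR divide_inverse)
  qed
  ultimately have "((\<lambda>e. gcomp V (g (e ^ j) /\<^sub>R e ^ j) k) \<longlongrightarrow> 0) (at_right 0)"
    by (rule Lim_transform_eventually)
  thus ?thesis using tendsto_unique[OF trivial_limit_at_right_real lim1] by blast
qed

locale smooth_map_of_graded_groups =
  G: graded_lie_group mG VG + H: graded_lie_group mH VH
  for mG :: "'g::euclidean_space \<Rightarrow> 'g \<Rightarrow> 'g" and VG :: "nat \<Rightarrow> 'g set"
    and mH :: "'h::euclidean_space \<Rightarrow> 'h \<Rightarrow> 'h" and VH :: "nat \<Rightarrow> 'h set" +
  fixes U :: "'g set" and Phi :: "'g \<Rightarrow> 'h"
  assumes open_U: "open U" and smooth_Phi: "smooth_on U Phi"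
begin

lemma Ck_on_Phi: "Ck_on k U Phi"
  using smooth_Phi smooth_on_iff_Ck_on[OF open_U] by blast

lemma open_U_Times: "open (U \<times> (UNIV :: 'g set))"
  using open_U by (simp add: open_Times)

lemma ldiff_eq:
  "ldiff mG mH Phi y v = H.dleft (- Phi y) (Phi y) (frechet_derivative Phi (at y) (G.dleft y 0 v))"
  unfolding ldiff_def H.inv_tau G.tau_eq_dleft by simp

lemma linear_ldiff: "y \<in> U \<Longrightarrow> linear (ldiff mG mH Phi y)"
  unfolding ldiff_eq[abs_def]
  by (intro linear_compose[unfolded o_def, OF G.linear_dleft]
      linear_compose[unfolded o_def, OF _ H.linear_dleft]
      has_derivative_linear[OF Ck_on_has_derivative[OF Ck_on_Phi[of "Suc 0"]]])

lemma Ck_on_ldiff: "Ck_on k (U \<times> UNIV) (\<lambda>p. ldiff mG mH Phi (fst p) (snd p))"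
proof -
  have Phi: "Ck_on k (U \<times> (UNIV :: 'g set)) (\<lambda>p. Phi (fst p))"
    using Ck_on_compose[OF open_U_Times Ck_on_Phi Ck_on_fst[OF Ck_on_id]] by auto
  have "Ck_on k (U \<times> UNIV) (\<lambda>p. (fst p, G.dleft (fst p) 0 (snd p)))"
    by (intro Ck_on_Pair Ck_on_fst Ck_on_snd Ck_on_id G.Ck_on_dleft[OF open_U_Times] Ck_on_const)
  hence "Ck_on k (U \<times> UNIV) (\<lambda>p. frechet_derivative Phi (at (fst p)) (G.dleft (fst p) 0 (snd p)))"
    using Ck_on_compose[OF open_U_Times Ck_on_frechet_derivative_joint[OF open_U Ck_on_Phi]]
    by force
  thus ?thesis unfolding ldiff_eq
    by (intro H.Ck_on_dleft[OF open_U_Times] Phi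
        Ck_on_bounded_linear[OF bounded_linear_minus[OF bounded_linear_ident]])
qed

lemma has_derivative_Phi_left_translated:
  assumes "y \<in> U"
  shows "((\<lambda>w. mH b (Phi (mG y w))) has_derivative
      (\<lambda>v. H.dleft (mH b (Phi y)) 0 (ldiff mG mH Phi y v))) (at 0)"
proof -
  have "(Phi has_derivative frechet_derivative Phi (at (mG y 0))) (at (mG y 0))"
    using Ck_on_has_derivative[OF Ck_on_Phi[of "Suc 0"]] assms by simp
  from has_derivative_compose[OF has_derivative_compose[OF G.has_derivative_left_translation this]
      H.has_derivative_left_translation]
  have "((\<lambda>w. mH b (Phi (mG y w))) has_derivative
      (\<lambda>v. H.dleft b (Phi y) (frechet_derivative Phi (at y) (G.dleft y 0 v)))) (at 0)"
    by simp
  thus ?thesis unfolding ldiff_eq H.dleft_eq_dleft_0[of b "Phi y"] .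
qed

lemma preserves_filtration_if_pansu_diff_at:
  assumes x: "x \<in> U" and "pansu_diff_at mG VG mH VH Phi x"
  shows "preserves_filtration_at mG VG mH VH Phi x"
  unfolding preserves_filtration_at_def H.span_low_degrees
proof (intro allI subsetI CollectI impI)
  fix j k y assume "y \<in> ldiff mG mH Phi x ` VG j" and "j < k"
  then obtain v where v: "v \<in> VG j" "y = ldiff mG mH Phi x v" by auto
  show "gcomp VH y k = 0"
  proof (cases "j = 0")
    case True
    thus ?thesis using v G.grading_0 linear_0[OF linear_ldiff[OF x]] by simp
  next
    case False
    define g where "g s = mH (- Phi x) (Phi (mG x (s *\<^sub>R v)))" for s
    have "((\<lambda>s. s *\<^sub>R v) has_derivative (\<lambda>h. h *\<^sub>R v)) (at 0)"
      by (intro derivative_eq_intros) auto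
    moreover have
      "((\<lambda>w. mH (- Phi x) (Phi (mG x w))) has_derivative ldiff mG mH Phi x) (at (0 *\<^sub>R v))"
      using has_derivative_Phi_left_translated[OF x, of "- Phi x"] by simp
    ultimately have "((\<lambda>s. mH (- Phi x) (Phi (mG x (s *\<^sub>R v)))) has_derivative
        (\<lambda>h. ldiff mG mH Phi x (h *\<^sub>R v))) (at 0)"
      by (rule has_derivative_compose)
    hence "(g has_vector_derivative y) (at 0)"
      by (simp add: g_def[abs_def] has_vector_derivative_def v(2)
          linear_scale[OF linear_ldiff[OF x]])
    moreover obtain l where "(pansu_quot mG VG mH VH Phi x v \<longlongrightarrow> l) (at_right 0)"
      using assms(2) unfolding pansu_diff_at_def by blast
    hence "((\<lambda>e. dil VH (1 / e) (g (e ^ j))) \<longlongrightarrow> l) (at_right 0)"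
      unfolding pansu_quot_def g_def G.dil_homogeneous[OF v(1)] .
    ultimately show ?thesis
      using H.gcomp_eq_0_if_dil_quotient_converges False \<open>j < k\<close> by (simp add: g_def)
  qed
qed

abbreviation deg :: nat where
  "deg \<equiv> max G.degree_bound H.degree_bound"

text \<open>For \<open>e > 0\<close> this is \<open>dil VH (1 / e) \<circ> ldiff mG mH Phi y \<circ> dil VG e\<close> at points where the
  filtration is preserved (\<open>dil_ldiff_dil\<close>); written as a polynomial in \<open>e\<close> it extends smoothly to
  \<open>e = 0\<close>, where only the degree-preserving part of \<open>ldiff mG mH Phi y\<close> survives.\<close>
definition rescaled_ldiff :: "real \<Rightarrow> 'g \<Rightarrow> 'g \<Rightarrow> 'h" where
  "rescaled_ldiff e y z =
     (\<Sum>j\<le>deg. \<Sum>k\<le>j. (e ^ (j - k)) *\<^sub>R gcomp VH (ldiff mG mH Phi y (gcomp VG z j)) k)"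

lemma dil_ldiff_dil:
  assumes y: "y \<in> U" and filt: "preserves_filtration_at mG VG mH VH Phi y" and e: "e > 0"
  shows "dil VH (1 / e) (ldiff mG mH Phi y (dil VG e z)) = rescaled_ldiff e y z"
proof -
  define c where "c k j = gcomp VH (ldiff mG mH Phi y (gcomp VG z j)) k" for k j
  have c0: "c k j = 0" if "j < k" for k j
  proof -
    have "ldiff mG mH Phi y (gcomp VG z j) \<in> span (\<Union>i\<in>{1..j}. VH i)"
      using filt G.gcomp_mem unfolding preserves_filtration_at_def by blast
    thus ?thesis unfolding c_def H.span_low_degrees using that by auto
  qed
  have "ldiff mG mH Phi y (dil VG e z) = (\<Sum>j\<le>deg. (e ^ j) *\<^sub>R ldiff mG mH Phi y (gcomp VG z j))"
    unfolding G.dil_eq_sum[of deg, OF max.cobounded1]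
    by (simp add: linear_sum[OF linear_ldiff[OF y]] linear_scale[OF linear_ldiff[OF y]])
  hence "gcomp VH (ldiff mG mH Phi y (dil VG e z)) k = (\<Sum>j\<le>deg. (e ^ j) *\<^sub>R c k j)" for k
    unfolding c_def by (simp add: linear_sum[OF H.linear_gcomp] H.gcomp_scaleR)
  hence "dil VH (1 / e) (ldiff mG mH Phi y (dil VG e z)) =
      (\<Sum>k\<le>deg. \<Sum>j\<le>deg. ((1 / e) ^ k * e ^ j) *\<^sub>R c k j)"
    by (simp add: H.dil_eq_sum[of deg, OF max.cobounded2] scaleR_sum_right)
  also have "\<dots> = (\<Sum>j\<le>deg. \<Sum>k\<le>deg. ((1 / e) ^ k * e ^ j) *\<^sub>R c k j)"
    by (rule sum.swap)
  also have "\<dots> = (\<Sum>j\<le>deg. \<Sum>k\<le>j. (e ^ (j - k)) *\<^sub>R c k j)"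
  proof (rule sum.cong[OF refl])
    fix j assume "j \<in> {..deg}"
    hence "(\<Sum>k\<le>deg. ((1 / e) ^ k * e ^ j) *\<^sub>R c k j) = (\<Sum>k\<le>j. ((1 / e) ^ k * e ^ j) *\<^sub>R c k j)"
      using c0 by (intro sum.mono_neutral_right) auto
    also have "\<dots> = (\<Sum>k\<le>j. (e ^ (j - k)) *\<^sub>R c k j)"
    proof (rule sum.cong[OF refl])
      fix k assume "k \<in> {..j}"
      hence "e ^ j = e ^ (j - k) * e ^ k" by (simp flip: power_add)
      thus "((1 / e) ^ k * e ^ j) *\<^sub>R c k j = (e ^ (j - k)) *\<^sub>R c k j"
        using e by (simp add: field_simps)
    qed
    finally show "(\<Sum>k\<le>deg. ((1 / e) ^ k * e ^ j) *\<^sub>R c k j) = (\<Sum>k\<le>j. (e ^ (j - k)) *\<^sub>R c k j)" .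
  qed
  finally show ?thesis unfolding rescaled_ldiff_def c_def .
qed

lemma Ck_on_rescaled_ldiff:
  "Ck_on k (UNIV \<times> U \<times> UNIV) (\<lambda>q. rescaled_ldiff (fst q) (fst (snd q)) (snd (snd q)))"
proof -
  have open_dom: "open (UNIV \<times> U \<times> (UNIV :: 'g set))" using open_U by (simp add: open_Times)
  have "Ck_on k (UNIV \<times> U \<times> (UNIV :: 'g set))
      (\<lambda>q. ldiff mG mH Phi (fst (snd q)) (gcomp VG (snd (snd q)) j))" for j
  proof -
    have "(\<lambda>q. (fst (snd q), gcomp VG (snd (snd q)) j)) ` (UNIV \<times> U \<times> (UNIV :: 'g set))
        \<subseteq> U \<times> UNIV"
      by auto
    thus ?thesis
      using Ck_on_compose[OF open_dom Ck_on_ldiff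
          Ck_on_Pair[OF Ck_on_fst[OF Ck_on_snd[OF Ck_on_id]]
            Ck_on_bounded_linear[OF G.bounded_linear_gcomp Ck_on_snd[OF Ck_on_snd[OF Ck_on_id]]]]]
      by simp
  qed
  note ldiff_gcomp = this
  show ?thesis unfolding rescaled_ldiff_def
    by (intro Ck_on_sum finite_atMost Ck_on_scaleR Ck_on_power Ck_on_fst Ck_on_id
        Ck_on_bounded_linear[OF H.bounded_linear_gcomp] ldiff_gcomp)
qed

lemma has_vector_derivative_pansu_quot_ray:
  assumes x: "x \<in> U" and e: "e > 0" and y: "mG x (dil VG e (t *\<^sub>R z)) \<in> U"
    and filt: "preserves_filtration_at mG VG mH VH Phi (mG x (dil VG e (t *\<^sub>R z)))"
  shows "((\<lambda>s. pansu_quot mG VG mH VH Phi x (s *\<^sub>R z) e) has_vector_derivative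
      H.dleft (pansu_quot mG VG mH VH Phi x (t *\<^sub>R z) e) 0
        (rescaled_ldiff e (mG x (dil VG e (t *\<^sub>R z))) z)) (at t)"
proof -
  define w where "w = dil VG e z"
  define y where "y = mG x (t *\<^sub>R w)"
  have y_eq: "mG x (dil VG e (t *\<^sub>R z)) = y" unfolding y_def w_def G.dil_scaleR ..
  have ray: "pansu_quot mG VG mH VH Phi x (s *\<^sub>R z) e =
      dil VH (1 / e) (mH (- Phi x) (Phi (mG y ((s - t) *\<^sub>R w))))"
    for s
    unfolding pansu_quot_def y_def w_def G.dil_scaleR G.mul_assoc G.mul_scaleR_scaleR by simp
  have "((\<lambda>s. (s - t) *\<^sub>R w) has_derivative (\<lambda>h. h *\<^sub>R w)) (at t)"
    by (intro derivative_eq_intros) auto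
  moreover have "((\<lambda>v. mH (- Phi x) (Phi (mG y v))) has_derivative
      (\<lambda>v. H.dleft (mH (- Phi x) (Phi y)) 0 (ldiff mG mH Phi y v))) (at ((t - t) *\<^sub>R w))"
    using has_derivative_Phi_left_translated y y_eq by simp
  ultimately have "((\<lambda>s. mH (- Phi x) (Phi (mG y ((s - t) *\<^sub>R w)))) has_derivative
      (\<lambda>h. H.dleft (mH (- Phi x) (Phi y)) 0 (ldiff mG mH Phi y (h *\<^sub>R w)))) (at t)"
    by (rule has_derivative_compose)
  from bounded_linear.has_derivative[OF H.bounded_linear_dil this]
  have "((\<lambda>s. pansu_quot mG VG mH VH Phi x (s *\<^sub>R z) e) has_derivative
      (\<lambda>h. h *\<^sub>R dil VH (1 / e) (H.dleft (mH (- Phi x) (Phi y)) 0 (ldiff mG mH Phi y w)))) (at t)"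
    using y y_eq
    by (simp add: ray linear_scale[OF linear_ldiff] linear_scale[OF H.linear_dleft] H.dil_scaleR)
  moreover have "dil VH (1 / e) (H.dleft (mH (- Phi x) (Phi y)) 0 (ldiff mG mH Phi y w)) =
      H.dleft (pansu_quot mG VG mH VH Phi x (t *\<^sub>R z) e) 0 (rescaled_ldiff e y z)"
    using H.dil_dleft_0[of "1 / e"] dil_ldiff_dil[of y e z] y y_eq filt e
    by (simp add: ray w_def)
  ultimately show ?thesis unfolding has_vector_derivative_def y_eq by simp
qed

lemma rescaled_ldiff_uniformly_close_on_rays:
  assumes "compact K" "K \<subseteq> U \<times> UNIV" "\<rho> > 0"
  obtains e1 where "e1 > 0"
    "\<And>e x z s. e \<in> {0<..<e1} \<Longrightarrow> (x, z) \<in> K \<Longrightarrow> s \<in> {0..1} \<Longrightarrow>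
       mG x (dil VG e (s *\<^sub>R z)) \<in> U \<and>
       dist (rescaled_ldiff e (mG x (dil VG e (s *\<^sub>R z))) z) (rescaled_ldiff 0 x z) < \<rho>"
proof -
  obtain e0 where "e0 > 0" and ray: "\<And>e x z s. e \<in> {0..e0} \<Longrightarrow> (x, z) \<in> K \<Longrightarrow> s \<in> {0..1} \<Longrightarrow>
      mG x (dil VG e (s *\<^sub>R z)) \<in> U"
    by (rule G.rays_in_open_set[OF assms(1) open_U assms(2)]) (rule that)
  define Y where "Y p = mG (fst (fst (snd p))) (dil VG (fst p) (snd (snd p) *\<^sub>R snd (fst (snd p))))"
    for p :: "real \<times> ('g \<times> 'g) \<times> real"
  define D where "D = {0..e0} \<times> (K \<times> {0..1::real})"
  have YD: "Y p \<in> U" if "p \<in> D" for p using that ray unfolding D_def Y_def by force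
  have "continuous_on D (\<lambda>p. (\<lambda>q. rescaled_ldiff (fst q) (fst (snd q)) (snd (snd q)))
      (fst p, Y p, snd (fst (snd p))))"
    by (rule continuous_on_compose2[OF Ck_on_imp_continuous_on[OF Ck_on_rescaled_ldiff[of 0]]])
      (use YD in \<open>auto simp: Y_def intro!: continuous_intros G.continuous_on_ray\<close>)
  hence "uniformly_continuous_on D (\<lambda>p. rescaled_ldiff (fst p) (Y p) (snd (fst (snd p))))"
    by (intro compact_uniformly_continuous) (auto simp: D_def intro!: compact_Times assms(1))
  then obtain d where "d > 0" and d: "\<forall>p\<in>D. \<forall>p'\<in>D. dist p' p < d \<longrightarrow>
      dist (rescaled_ldiff (fst p') (Y p') (snd (fst (snd p'))))
        (rescaled_ldiff (fst p) (Y p) (snd (fst (snd p)))) < \<rho>"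
    using assms(3) unfolding uniformly_continuous_on_def by blast
  show thesis
  proof (rule that[of "min d e0"])
    show "min d e0 > 0" using \<open>d > 0\<close> \<open>e0 > 0\<close> by simp
    fix e s :: real and x z assume e: "e \<in> {0<..<min d e0}" and "(x, z) \<in> K" "s \<in> {0..1}"
    hence inD: "(e, ((x, z), s)) \<in> D" "(0, ((x, z), s)) \<in> D" using \<open>e0 > 0\<close> unfolding D_def by auto
    show "mG x (dil VG e (s *\<^sub>R z)) \<in> U \<and>
        dist (rescaled_ldiff e (mG x (dil VG e (s *\<^sub>R z))) z) (rescaled_ldiff 0 x z) < \<rho>"
      using YD[OF inD(1)] d[rule_format, OF inD(2,1)] e by (simp add: Y_def G.dil_0 dist_Pair_Pair)
  qed
qed

lemma uniform_limit_pansu_quot: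
  assumes K: "compact K" "K \<subseteq> U \<times> UNIV"
    and filt: "\<forall>y\<in>U. preserves_filtration_at mG VG mH VH Phi y"
  shows "uniform_limit K (\<lambda>e q. pansu_quot mG VG mH VH Phi (fst q) (snd q) e)
      (\<lambda>q. rescaled_ldiff 0 (fst q) (snd q)) (at_right 0)"
proof -
  let ?pq = "pansu_quot mG VG mH VH Phi"
  have "continuous_on K
      (\<lambda>q. (\<lambda>q. rescaled_ldiff (fst q) (fst (snd q)) (snd (snd q))) (0, fst q, snd q))"
    by (rule continuous_on_compose2[OF Ck_on_imp_continuous_on[OF Ck_on_rescaled_ldiff[of 0]]])
      (use K(2) in \<open>auto intro!: continuous_intros\<close>)
  hence "bounded ((\<lambda>q. rescaled_ldiff 0 (fst q) (snd q)) ` K)"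
    by (intro compact_imp_bounded compact_continuous_image K(1)) simp
  then obtain Am where "Am > 0" and Am: "\<And>q. q \<in> K \<Longrightarrow> norm (rescaled_ldiff 0 (fst q) (snd q)) \<le> Am"
    unfolding bounded_pos by auto
  obtain C where "C > 0" and C:
    "\<And>a \<gamma> u \<rho>. norm a \<le> Am \<Longrightarrow> \<gamma> 0 = 0 \<Longrightarrow> C * \<rho> < 1 \<Longrightarrow>
       (\<And>s. s \<in> {0..1} \<Longrightarrow> (\<gamma> has_vector_derivative H.dleft (\<gamma> s) 0 (u s)) (at s within {0..1})) \<Longrightarrow>
       (\<And>s. s \<in> {0..1} \<Longrightarrow> norm (u s - a) \<le> \<rho>) \<Longrightarrow> norm (\<gamma> 1 - a) \<le> C * \<rho>"
    by (rule H.close_to_one_parameter_subgroup[of Am]) (use \<open>Am > 0\<close> that in auto)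
  show ?thesis unfolding uniform_limit_iff
  proof (intro allI impI)
    fix \<delta> :: real assume "\<delta> > 0"
    define \<rho> where "\<rho> = min \<delta> 1 / (2 * C)"
    have "\<rho> > 0" "C * \<rho> < 1" "C * \<rho> < \<delta>"
      unfolding \<rho>_def using \<open>\<delta> > 0\<close> \<open>C > 0\<close> by auto
    obtain e1 where "e1 > 0" and close: "\<And>e x z s. e \<in> {0<..<e1} \<Longrightarrow> (x, z) \<in> K \<Longrightarrow> s \<in> {0..1} \<Longrightarrow>
        mG x (dil VG e (s *\<^sub>R z)) \<in> U \<and>
        dist (rescaled_ldiff e (mG x (dil VG e (s *\<^sub>R z))) z) (rescaled_ldiff 0 x z) < \<rho>"
      by (rule rescaled_ldiff_uniformly_close_on_rays[OF K \<open>\<rho> > 0\<close>]) (rule that)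
    show "\<forall>\<^sub>F e in at_right 0. \<forall>q\<in>K.
        dist (?pq (fst q) (snd q) e) (rescaled_ldiff 0 (fst q) (snd q)) < \<delta>"
      unfolding eventually_at_right_field
    proof (intro exI[of _ e1] conjI allI impI ballI)
      show "e1 > 0" by fact
      fix e q assume e: "0 < e" "e < e1" and "q \<in> K"
      obtain x z where q: "q = (x, z)" by (cases q)
      have "(x, z) \<in> K" using \<open>q \<in> K\<close> q by simp
      hence "x \<in> U" using K(2) by auto
      have "norm (?pq x (1 *\<^sub>R z) e - rescaled_ldiff 0 x z) \<le> C * \<rho>"
      proof (rule C[where \<gamma>="\<lambda>s. ?pq x (s *\<^sub>R z) e"
            and u="\<lambda>s. rescaled_ldiff e (mG x (dil VG e (s *\<^sub>R z))) z"])
        show "norm (rescaled_ldiff 0 x z) \<le> Am" using Am[OF \<open>q \<in> K\<close>] q by simp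
        show "?pq x (0 *\<^sub>R z) e = 0" by (simp add: pansu_quot_def G.dil_zero H.dil_zero)
        show "C * \<rho> < 1" by fact
        fix s :: real assume s: "s \<in> {0..1}"
        have ray: "mG x (dil VG e (s *\<^sub>R z)) \<in> U \<and>
            dist (rescaled_ldiff e (mG x (dil VG e (s *\<^sub>R z))) z) (rescaled_ldiff 0 x z) < \<rho>"
          using close[OF _ \<open>(x, z) \<in> K\<close> s] e by auto
        show "((\<lambda>s. ?pq x (s *\<^sub>R z) e) has_vector_derivative
            H.dleft (?pq x (s *\<^sub>R z) e) 0 (rescaled_ldiff e (mG x (dil VG e (s *\<^sub>R z))) z))
            (at s within {0..1})"
          using has_vector_derivative_pansu_quot_ray[OF \<open>x \<in> U\<close> e(1)] ray filt
          by (blast intro: has_vector_derivative_at_within)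
        show "norm (rescaled_ldiff e (mG x (dil VG e (s *\<^sub>R z))) z - rescaled_ldiff 0 x z) \<le> \<rho>"
          using ray by (simp add: dist_norm)
      qed
      thus "dist (?pq (fst q) (snd q) e) (rescaled_ldiff 0 (fst q) (snd q)) < \<delta>"
        using \<open>C * \<rho> < \<delta>\<close> q by (simp add: dist_norm)
    qed
  qed
qed

lemma PD_eq_rescaled_ldiff:
  assumes "\<forall>y\<in>U. preserves_filtration_at mG VG mH VH Phi y" "x \<in> U"
  shows "(pansu_quot mG VG mH VH Phi x z \<longlongrightarrow> rescaled_ldiff 0 x z) (at_right 0)"
    and "PD mG VG mH VH Phi x z = rescaled_ldiff 0 x z"
proof -
  have "uniform_limit {(x, z)} (\<lambda>e q. pansu_quot mG VG mH VH Phi (fst q) (snd q) e)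
      (\<lambda>q. rescaled_ldiff 0 (fst q) (snd q)) (at_right 0)"
    using assms by (intro uniform_limit_pansu_quot) auto
  from tendsto_uniform_limitI[OF this, of "(x, z)"]
  show lim: "(pansu_quot mG VG mH VH Phi x z \<longlongrightarrow> rescaled_ldiff 0 x z) (at_right 0)" by simp
  show "PD mG VG mH VH Phi x z = rescaled_ldiff 0 x z"
    unfolding PD_def by (rule tendsto_Lim[OF trivial_limit_at_right_real lim])
qed

theorem unif_pansu_diff_on_iff_preserves_filtration:
  "unif_pansu_diff_on mG VG mH VH Phi U \<longleftrightarrow> (\<forall>x\<in>U. preserves_filtration_at mG VG mH VH Phi x)"
proof
  assume "unif_pansu_diff_on mG VG mH VH Phi U"
  thus "\<forall>x\<in>U. preserves_filtration_at mG VG mH VH Phi x"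
    unfolding unif_pansu_diff_on_def using preserves_filtration_if_pansu_diff_at by blast
next
  assume filt: "\<forall>x\<in>U. preserves_filtration_at mG VG mH VH Phi x"
  have "\<exists>K. compact K \<and> K \<subseteq> U \<times> UNIV \<and> p \<in> interior K \<and>
      uniform_limit K (\<lambda>e q. pansu_quot mG VG mH VH Phi (fst q) (snd q) e)
        (\<lambda>q. PD mG VG mH VH Phi (fst q) (snd q)) (at_right 0)"
    if p: "p \<in> U \<times> UNIV" for p
  proof -
    obtain r where "r > 0" and r: "cball p r \<subseteq> U \<times> UNIV"
      using open_contains_cball open_U_Times p by blast
    have "uniform_limit (cball p r) (\<lambda>e q. pansu_quot mG VG mH VH Phi (fst q) (snd q) e)
        (\<lambda>q. rescaled_ldiff 0 (fst q) (snd q)) (at_right 0)"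
      by (rule uniform_limit_pansu_quot[OF compact_cball r filt])
    moreover have "PD mG VG mH VH Phi (fst q) (snd q) = rescaled_ldiff 0 (fst q) (snd q)"
      if "q \<in> cball p r" for q
      using PD_eq_rescaled_ldiff(2)[OF filt] r that by auto
    ultimately have "uniform_limit (cball p r) (\<lambda>e q. pansu_quot mG VG mH VH Phi (fst q) (snd q) e)
        (\<lambda>q. PD mG VG mH VH Phi (fst q) (snd q)) (at_right 0)"
      by (subst uniform_limit_cong'[where g="\<lambda>e q. pansu_quot mG VG mH VH Phi (fst q) (snd q) e"
            and i="\<lambda>q. rescaled_ldiff 0 (fst q) (snd q)"]) auto
    thus ?thesis using \<open>r > 0\<close> r by (intro exI[of _ "cball p r"]) auto
  qed
  moreover have "pansu_diff_at mG VG mH VH Phi x" if "x \<in> U" for x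
    unfolding pansu_diff_at_def using PD_eq_rescaled_ldiff(1)[OF filt that] by blast
  ultimately show "unif_pansu_diff_on mG VG mH VH Phi U"
    unfolding unif_pansu_diff_on_def by blast
qed

theorem smooth_on_PD:
  assumes "\<forall>x\<in>U. preserves_filtration_at mG VG mH VH Phi x"
  shows "smooth_on (U \<times> UNIV) (\<lambda>p. PD mG VG mH VH Phi (fst p) (snd p))"
  unfolding smooth_on_iff_Ck_on[OF open_U_Times]
proof
  fix k
  have into: "(\<lambda>p. (0, fst p, snd p)) ` (U \<times> UNIV) \<subseteq> UNIV \<times> U \<times> (UNIV :: 'g set)" by auto
  have "Ck_on k (U \<times> UNIV) (\<lambda>p. (0 :: real, fst p, snd p))"
    by (intro Ck_on_Pair Ck_on_const Ck_on_fst Ck_on_snd Ck_on_id)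
  from Ck_on_compose[OF open_U_Times Ck_on_rescaled_ldiff this into]
  have "Ck_on k (U \<times> UNIV) (\<lambda>p. rescaled_ldiff 0 (fst p) (snd p))" by simp
  thus "Ck_on k (U \<times> UNIV) (\<lambda>p. PD mG VG mH VH Phi (fst p) (snd p))"
    by (rule Ck_on_cong[OF open_U_Times, rotated]) (use PD_eq_rescaled_ldiff(2)[OF assms] in auto)
qed

end

theorem theorem1p5:
  fixes mG :: "'g::euclidean_space \<Rightarrow> 'g \<Rightarrow> 'g" and VG :: "nat \<Rightarrow> 'g set"
    and mH :: "'h::euclidean_space \<Rightarrow> 'h \<Rightarrow> 'h" and VH :: "nat \<Rightarrow> 'h set"
    and U :: "'g set" and Phi :: "'g \<Rightarrow> 'h"
  assumes "graded_group mG VG" and "graded_group mH VH"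
    and "open U" and "smooth_on U Phi"
  shows "(unif_pansu_diff_on mG VG mH VH Phi U \<longleftrightarrow>
            (\<forall>x\<in>U. preserves_filtration_at mG VG mH VH Phi x))
       \<and> ((\<forall>x\<in>U. preserves_filtration_at mG VG mH VH Phi x) \<longrightarrow>
            smooth_on (U \<times> UNIV) (\<lambda>p. PD mG VG mH VH Phi (fst p) (snd p)))"
proof -
  interpret smooth_map_of_graded_groups mG VG mH VH U Phi
    by unfold_locales (fact assms)+
  show ?thesis using unif_pansu_diff_on_iff_preserves_filtration smooth_on_PD by blast
qed

end
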